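(* Suppose $\mathcal{A}$ is linearly independent. Let $F\subseteq I$ be a homogeneous Gröbner basis of $I$ with respect to a weight vector $\omega_1$ on $\mathbb{K}[x]$, and let $G\subseteq J$ be a homogeneous Gröbner basis of $J$ with respect to a weight vector $\omega_2$ on $\mathbb{K}[y]$. Then $\mathrm{Lift}(F)\cup\mathrm{Lift}(G)\cup\mathrm{Quad}_B$ is a pseudo-Gröbner basis of $I\times_{\mathcal{A}}J$ with respect to the weight vector $\phi_B^*(\omega_1,\omega_2)$.
   Context: Setup: $\mathbb{K}$ a field, $r\ge1$, $s,t\in\mathbb{Z}_{>0}^r$; $\mathbb{K}[x]=\mathbb{K}[x^i_j: i\in[r],j\in[s_i]]$, $\mathbb{K}[y]=\mathbb{K}[y^i_k:i\in[r],k\in[t_i]]$ multigraded by $\deg x^i_j=\deg y^i_k=\mathbf{a}^i\in\mathbb{Z}^d$, $\mathcal{A}=\{\mathbf{a}^1,\dots,\mathbf{a}^r\}$, with some $\omega\in\mathbb{Q}^d$ satisfying $\omega^T\mathbf{a}^i=1$ for all $i$. $I\subseteq\mathbb{K}[x]$, $J\subseteq\mathbb{K}[y]$ are homogeneous ideals for this multigrading. $\mathbb{K}[z]=\mathbb{K}[z^i_{jk}:i\in[r],j\in[s_i],k\in[t_i]]$; the toric fiber product $I\times_{\mathcal{A}}J$ is the kernel of $\mathbb{K}[z]\to\mathbb{K}[x]/I\otimes_{\mathbb{K}}\mathbb{K}[y]/J$, $z^i_{jk}\mapsto x^i_j\otimes y^i_k$. $\phi_B:\mathbb{K}[z]\to\mathbb{K}[x,y]$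 is the monomial map $z^i_{jk}\mapsto x^i_jy^i_k$ with exponent matrix $B$, and for a weight vector $\nu$ on $\mathbb{K}[x,y]$ the pullback weight is $\phi_B^*\nu=\nu^TB$ (the weight of $z^i_{jk}$ is $\nu(x^i_j)+\nu(y^i_k)$); $(\omega_1,\omega_2)$ is the concatenated weight on $\mathbb{K}[x,y]$. $\mathrm{Quad}_B=\{z^i_{j_1k_2}z^i_{j_2k_1}-z^i_{j_1k_1}z^i_{j_2k_2}: i\in[r],1\le j_1<j_2\le s_i,1\le k_1<k_2\le t_i\}$. Weights: for a weight vector $\nu$, $\mathrm{in}_\nu(f)$ is the sum of the terms of $f$ of maximal $\nu$-weight and $\mathrm{in}_\nu(I)=\langle\mathrm{in}_\nu(f):f\in I\rangle$. A finite set $G\subseteq I$ is a pseudo-Gröbner basis of $I$ with respect to $\nu$ if $\langle\mathrm{in}_\nu(g):g\in G\rangle=\mathrm{in}_\nu(I)$, and a Gröbner basis with respect to $\nu$ if additionally this ideal is a monomial ideal. Lifts (for $\mathcal{A}$ linearly independent): a homogeneous $f\in I$ of degree $d$ can be written (after reordering the factors of each monomial) as $f=\sum_{u=1}^v c_u\,x^{i_1}_{j^u_1}x^{i_2}_{j^u_2}\cdots x^{i_d}_{j^u_d}$ with the same sequence of upper indices $i_1,\dots,i_d$ for every term. For $k=(k_1,\dots,k_d)\in T_f:=\prod_{l=1}^d[t_{i_l}]$ put $f_k=\sum_u c_u\,z^{i_1}_{j^u_1k_1}\cdots z^{i_d}_{j^u_dk_d}$, and $\mathrm{Lift}(F)=\{f_k: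 f\in F,\ k\in T_f\}$. Analogously, for homogeneous $g=\sum_u c_u\,y^{i_1}_{k^u_1}\cdots y^{i_d}_{k^u_d}\in J$ and $j\in\prod_l[s_{i_l}]$, $g_j=\sum_u c_u\,z^{i_1}_{j_1k^u_1}\cdots z^{i_d}_{j_dk^u_d}$, and $\mathrm{Lift}(G)=\{g_j\}$. *)

theory Defs
  imports Complex_Main "HOL-Library.Poly_Mapping"
begin

text \<open>A polynomial in variables of type 'v with coefficients in 'k is a finitely
supported map from monomials (finitely supported exponent vectors 'v =>0 nat)
to coefficients.\<close>

type_synonym ('v, 'k) mpoly = "('v \<Rightarrow>\<^sub>0 nat) \<Rightarrow>\<^sub>0 'k"

definition Var :: "'v \<Rightarrow> ('v, 'k::{zero,one}) mpoly" where
  "Var v = Poly_Mapping.single (Poly_Mapping.single v 1) 1"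

definition mono :: "('v \<Rightarrow>\<^sub>0 nat) \<Rightarrow> ('v, 'k::{zero,one}) mpoly" where
  "mono m = Poly_Mapping.single m 1"

definition polys_in :: "'v set \<Rightarrow> ('v, 'k::zero) mpoly set" where
  "polys_in V = {p :: ('v, 'k) mpoly. \<forall>m \<in> Poly_Mapping.keys p. Poly_Mapping.keys m \<subseteq> V}"

definition is_ideal :: "'a::comm_ring_1 set \<Rightarrow> 'a set \<Rightarrow> bool" where
  "is_ideal R I \<longleftrightarrow> I \<subseteq> R \<and> 0 \<in> I \<and> (\<forall>a\<in>I. \<forall>b\<in>I. a + b \<in> I)
      \<and> (\<forall>a\<in>R. \<forall>b\<in>I. a * b \<in> I)"

definition ideal_gen :: "'a::comm_ring_1 set \<Rightarrow> 'a set \<Rightarrow> 'a set" where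
  "ideal_gen R S = \<Inter>{J. is_ideal R J \<and> S \<subseteq> J}"

definition monomial_ideal :: "('v, 'k::comm_ring_1) mpoly set \<Rightarrow> ('v, 'k) mpoly set \<Rightarrow> bool" where
  "monomial_ideal R J \<longleftrightarrow> (\<exists>M. mono ` M \<subseteq> R \<and> J = ideal_gen R (mono ` M))"

definition pfilter :: "(('v \<Rightarrow>\<^sub>0 nat) \<Rightarrow> bool) \<Rightarrow> ('v, 'k::comm_monoid_add) mpoly \<Rightarrow> ('v, 'k) mpoly" where
  "pfilter P f = (\<Sum>m\<in>{m \<in> Poly_Mapping.keys f. P m}. Poly_Mapping.single m (Poly_Mapping.lookup f m))"

definition subst :: "('v \<Rightarrow> ('w, 'k::comm_ring_1) mpoly) \<Rightarrow> ('v, 'k) mpoly \<Rightarrow> ('w, 'k) mpoly" where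
  "subst \<sigma> p = (\<Sum>m\<in>Poly_Mapping.keys p. Poly_Mapping.single 0 (Poly_Mapping.lookup p m) * (\<Prod>v\<in>Poly_Mapping.keys m. \<sigma> v ^ Poly_Mapping.lookup m v))"

definition mweight :: "('v \<Rightarrow> real) \<Rightarrow> ('v \<Rightarrow>\<^sub>0 nat) \<Rightarrow> real" where
  "mweight \<nu> m = (\<Sum>v\<in>Poly_Mapping.keys m. real (Poly_Mapping.lookup m v) * \<nu> v)"

definition init :: "('v \<Rightarrow> real) \<Rightarrow> ('v, 'k::comm_monoid_add) mpoly \<Rightarrow> ('v, 'k) mpoly" where
  "init \<nu> f = pfilter (\<lambda>m. mweight \<nu> m = Max (mweight \<nu> ` Poly_Mapping.keys f)) f"

definition init_ideal :: "('v, 'k::comm_ring_1) mpoly set \<Rightarrow> ('v \<Rightarrow> real) \<Rightarrow> ('v, 'k) mpoly set \<Rightarrow> ('v, 'k) mpoly set" where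
  "init_ideal R \<nu> I = ideal_gen R (init \<nu> ` I)"

definition pseudo_groebner :: "('v, 'k::comm_ring_1) mpoly set \<Rightarrow> ('v \<Rightarrow> real) \<Rightarrow> ('v, 'k) mpoly set \<Rightarrow> ('v, 'k) mpoly set \<Rightarrow> bool" where
  "pseudo_groebner R \<nu> I G \<longleftrightarrow> finite G \<and> G \<subseteq> I \<and> ideal_gen R (init \<nu> ` G) = init_ideal R \<nu> I"

definition groebner :: "('v, 'k::comm_ring_1) mpoly set \<Rightarrow> ('v \<Rightarrow> real) \<Rightarrow> ('v, 'k) mpoly set \<Rightarrow> ('v, 'k) mpoly set \<Rightarrow> bool" where
  "groebner R \<nu> I G \<longleftrightarrow> pseudo_groebner R \<nu> I G \<and> monomial_ideal R (init_ideal R \<nu> I)"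

text \<open>Indices are 1-based: x-variables (i,j) with i in [r], j in [s i];
y-variables (i,k) with i in [r], k in [t i]; z-variables (i,j,k).\<close>

definition xvars :: "nat \<Rightarrow> (nat \<Rightarrow> nat) \<Rightarrow> (nat \<times> nat) set" where
  "xvars r s = {(i, j). 1 \<le> i \<and> i \<le> r \<and> 1 \<le> j \<and> j \<le> s i}"

definition zvars :: "nat \<Rightarrow> (nat \<Rightarrow> nat) \<Rightarrow> (nat \<Rightarrow> nat) \<Rightarrow> (nat \<times> nat \<times> nat) set" where
  "zvars r s t = {(i, j, k). 1 \<le> i \<and> i \<le> r \<and> 1 \<le> j \<and> j \<le> s i \<and> 1 \<le> k \<and> k \<le> t i}"

definition mdeg :: "(nat \<Rightarrow> 'd \<Rightarrow> int) \<Rightarrow> (nat \<times> nat \<Rightarrow>\<^sub>0 nat) \<Rightarrow> 'd \<Rightarrow> int" where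
  "mdeg a m = (\<lambda>c. \<Sum>v\<in>Poly_Mapping.keys m. int (Poly_Mapping.lookup m v) * a (fst v) c)"

definition homogeneous :: "(nat \<Rightarrow> 'd \<Rightarrow> int) \<Rightarrow> (nat \<times> nat, 'k::zero) mpoly \<Rightarrow> bool" where
  "homogeneous a f \<longleftrightarrow> (\<forall>m1\<in>Poly_Mapping.keys f. \<forall>m2\<in>Poly_Mapping.keys f. mdeg a m1 = mdeg a m2)"

definition homogeneous_ideal :: "(nat \<Rightarrow> 'd \<Rightarrow> int) \<Rightarrow> (nat \<times> nat, 'k::comm_monoid_add) mpoly set \<Rightarrow> bool" where
  "homogeneous_ideal a I \<longleftrightarrow> (\<forall>f\<in>I. \<forall>D. pfilter (\<lambda>m. mdeg a m = D) f \<in> I)"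

definition lin_indep :: "nat \<Rightarrow> (nat \<Rightarrow> 'd \<Rightarrow> int) \<Rightarrow> bool" where
  "lin_indep r a \<longleftrightarrow> (\<forall>cf::nat \<Rightarrow> rat. (\<forall>c. (\<Sum>i=1..r. cf i * of_int (a i c)) = 0)
      \<longrightarrow> (\<forall>i\<in>{1..r}. cf i = 0))"

text \<open>K[x]/I (x) K[y]/J is identified with K[x,y]/(I K[x,y] + J K[x,y]),
the x-variables being Inl (i,j) and the y-variables Inr (i,k); the map
z(i,j,k) |-> x(i,j) (x) y(i,k) is then phi_B followed by the quotient map.\<close>
definition phiB :: "(nat \<times> nat \<times> nat, 'k::comm_ring_1) mpoly \<Rightarrow> ((nat \<times> nat) + (nat \<times> nat), 'k) mpoly" where
  "phiB = subst (\<lambda>(i, j, k). Var (Inl (i, j)) * Var (Inr (i, k)))"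

definition toric_fiber_product ::
  "nat \<Rightarrow> (nat \<Rightarrow> nat) \<Rightarrow> (nat \<Rightarrow> nat) \<Rightarrow> (nat \<times> nat, 'k::comm_ring_1) mpoly set
     \<Rightarrow> (nat \<times> nat, 'k) mpoly set \<Rightarrow> (nat \<times> nat \<times> nat, 'k) mpoly set" where
  "toric_fiber_product r s t I J =
     {f \<in> polys_in (zvars r s t).
        phiB f \<in> ideal_gen (polys_in (Inl ` xvars r s \<union> Inr ` xvars r t))
                   (subst (\<lambda>v. Var (Inl v)) ` I \<union> subst (\<lambda>v. Var (Inr v)) ` J)}"

definition pullback_weight :: "(nat \<times> nat \<Rightarrow> real) \<Rightarrow> (nat \<times> nat \<Rightarrow> real) \<Rightarrow> nat \<times> nat \<times> nat \<Rightarrow> real" where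
  "pullback_weight w1 w2 = (\<lambda>(i, j, k). w1 (i, j) + w2 (i, k))"

definition QuadB :: "nat \<Rightarrow> (nat \<Rightarrow> nat) \<Rightarrow> (nat \<Rightarrow> nat) \<Rightarrow> (nat \<times> nat \<times> nat, 'k::comm_ring_1) mpoly set" where
  "QuadB r s t = {Var (i, j1, k2) * Var (i, j2, k1) - Var (i, j1, k1) * Var (i, j2, k2) | i j1 j2 k1 k2.
      1 \<le> i \<and> i \<le> r \<and> 1 \<le> j1 \<and> j1 < j2 \<and> j2 \<le> s i \<and> 1 \<le> k1 \<and> k1 < k2 \<and> k2 \<le> t i}"

text \<open>A representation of a homogeneous f: a sequence of upper indices is = [i_1,...,i_d]
(common to all terms) and for every monomial m of f a sequence js m = [j_1,...,j_d] of lower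
indices such that m = x^{i_1}_{j_1} ... x^{i_d}_{j_d}.\<close>
definition valid_rep :: "(nat \<times> nat, 'k::zero) mpoly \<Rightarrow> nat list \<Rightarrow> ((nat \<times> nat \<Rightarrow>\<^sub>0 nat) \<Rightarrow> nat list) \<Rightarrow> bool" where
  "valid_rep f is js \<longleftrightarrow> (\<forall>m\<in>Poly_Mapping.keys f. length (js m) = length is \<and>
      m = (\<Sum>l<length is. Poly_Mapping.single (is ! l, js m ! l) 1))"

definition index_tuples :: "(nat \<Rightarrow> nat) \<Rightarrow> nat list \<Rightarrow> nat list set" where
  "index_tuples t is = {k. length k = length is \<and> (\<forall>l<length is. 1 \<le> k ! l \<and> k ! l \<le> t (is ! l))}"

definition lift_x :: "(nat \<times> nat, 'k::comm_ring_1) mpoly \<Rightarrow> nat list \<Rightarrow> ((nat \<times> nat \<Rightarrow>\<^sub>0 nat) \<Rightarrow> nat list)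
     \<Rightarrow> nat list \<Rightarrow> (nat \<times> nat \<times> nat, 'k) mpoly" where
  "lift_x f is js k = (\<Sum>m\<in>Poly_Mapping.keys f. Poly_Mapping.single
      (\<Sum>l<length is. Poly_Mapping.single (is ! l, js m ! l, k ! l) 1) (Poly_Mapping.lookup f m))"

definition lift_y :: "(nat \<times> nat, 'k::comm_ring_1) mpoly \<Rightarrow> nat list \<Rightarrow> ((nat \<times> nat \<Rightarrow>\<^sub>0 nat) \<Rightarrow> nat list)
     \<Rightarrow> nat list \<Rightarrow> (nat \<times> nat \<times> nat, 'k) mpoly" where
  "lift_y g is ks j = (\<Sum>m\<in>Poly_Mapping.keys g. Poly_Mapping.single
      (\<Sum>l<length is. Poly_Mapping.single (is ! l, j ! l, ks m ! l) 1) (Poly_Mapping.lookup g m))"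

text \<open>Lift(F) with respect to a chosen representation rep f = (is, js) of every f in F.\<close>
definition LiftX :: "(nat \<Rightarrow> nat) \<Rightarrow> (nat \<times> nat, 'k::comm_ring_1) mpoly set
     \<Rightarrow> ((nat \<times> nat, 'k) mpoly \<Rightarrow> nat list \<times> ((nat \<times> nat \<Rightarrow>\<^sub>0 nat) \<Rightarrow> nat list))
     \<Rightarrow> (nat \<times> nat \<times> nat, 'k) mpoly set" where
  "LiftX t F rep = {lift_x f (fst (rep f)) (snd (rep f)) k | f k. f \<in> F \<and> k \<in> index_tuples t (fst (rep f))}"

definition LiftY :: "(nat \<Rightarrow> nat) \<Rightarrow> (nat \<times> nat, 'k::comm_ring_1) mpoly set
     \<Rightarrow> ((nat \<times> nat, 'k) mpoly \<Rightarrow> nat list \<times> ((nat \<times> nat \<Rightarrow>\<^sub>0 nat) \<Rightarrow> nat list))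
     \<Rightarrow> (nat \<times> nat \<times> nat, 'k) mpoly set" where
  "LiftY s G rep = {lift_y g (fst (rep g)) (snd (rep g)) j | g j. g \<in> G \<and> j \<in> index_tuples s (fst (rep g))}"

end

theory Submission
  imports Defs
begin

text \<open>Let \<open>N\<close> be the ideal generated by the initial forms of \<open>Lift(F) \<union> Lift(G) \<union> Quad\<^sub>B\<close>.
  The quadrics are homogeneous for the pulled back weight, so \<open>N\<close> contains them, and modulo
  the quadrics a \<open>z\<close>-monomial only depends on its two projections, an \<open>x\<close>-monomial \<open>u\<close> and a
  \<open>y\<close>-monomial \<open>w\<close>. The \<open>x\<close>-polynomials all of whose lifts lie in \<open>N\<close> form an ideal; as the
  initial form of a lift \<open>f\<^sub>k\<close> is the lift of \<open>in(f)\<close>, it contains \<open>in(F)\<close>, hence \<open>in(I)\<close>;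
  likewise for \<open>in(J)\<close>. For \<open>h\<close> in the toric fiber product, \<open>in(h)\<close> is therefore congruent
  modulo \<open>N\<close> to a combination of the classes of the monomials \<open>x\<^sup>u y\<^sup>w\<close> of \<open>\<phi>\<^sub>B(in(h))\<close>,
  which is either zero or \<open>in(\<phi>\<^sub>B h)\<close>. As \<open>\<phi>\<^sub>B h\<close> lies in the ideal generated by \<open>I\<close> and
  \<open>J\<close>, whose standard monomials are products of standard monomials of \<open>I\<close> and of \<open>J\<close>
  (seen by pairing with products of normal form coefficients), each such \<open>u\<close> lies in \<open>in(I)\<close>
  or \<open>w\<close> in \<open>in(J)\<close>, and so its class lies in \<open>N\<close>.\<close>

abbreviation (input) lookup where "lookup \<equiv> Poly_Mapping.lookup"
abbreviation (input) keys where "keys \<equiv> Poly_Mapping.keys"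
abbreviation (input) single where "single \<equiv> Poly_Mapping.single"

lemma lookup_sum_single:
  "lookup (\<Sum>m\<in>A. single m (c m)) x = (if finite A \<and> x \<in> A then c x else 0)"
  by (cases "finite A") (auto simp: lookup_sum lookup_single when_def)

lemma sum_single_lookup:
  assumes "finite A" "keys p \<subseteq> A"
  shows "(\<Sum>m\<in>A. single m (lookup p m)) = p"
proof (rule poly_mapping_eqI)
  fix x show "lookup (\<Sum>m\<in>A. single m (lookup p m)) x = lookup p x"
    using assms by (auto simp: lookup_sum_single in_keys_iff)
qed

lemma poly_eq_sum_single: "p = (\<Sum>m\<in>keys p. single m (lookup p m))"
  by (simp add: sum_single_lookup)

lemma mult_eq_sum_terms: "a * p = (\<Sum>x\<in>keys a. single x (lookup a x) * p)"
  by (subst (1) poly_eq_sum_single) (simp add: sum_distrib_right)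

lemma single_mult_eq_sum: "single a c * p = (\<Sum>m\<in>keys p. single (a + m) (c * lookup p m))"
  by (subst (1) poly_eq_sum_single) (simp add: sum_distrib_left mult_single)

lemma lookup_single_mult:
  fixes a m :: "'m::cancel_comm_monoid_add"
  shows "lookup (single a c * p) (a + m) = c * lookup p m"
proof -
  have "lookup (single a c * p) (a + m) = (\<Sum>m'\<in>keys p. if m' = m then c * lookup p m else 0)"
    by (simp add: single_mult_eq_sum lookup_sum lookup_single when_def)
  then show ?thesis by (simp add: sum.delta in_keys_iff)
qed

lemma keys_single_mult: "keys (single a c * p) \<subseteq> (\<lambda>m. a + m) ` keys p"
  using keys_mult[of "single a c" p] by (cases "c = 0") auto

lemma lookup_single_mult_notin:
  fixes a :: "'m::cancel_comm_monoid_add"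
  assumes "\<And>m. x \<noteq> a + m"
  shows "lookup (single a c * p) x = 0"
proof -
  have "x \<notin> keys (single a c * p)" using keys_single_mult[of a c p] assms by auto
  then show ?thesis by (simp add: in_keys_iff)
qed

lemma keys_single_mult_eq:
  fixes a :: "'m::cancel_comm_monoid_add" and c :: "'k::field"
  assumes "c \<noteq> 0"
  shows "keys (single a c * p) = (\<lambda>m. a + m) ` keys p"
  using keys_single_mult[of a c p] assms by (auto simp: in_keys_iff lookup_single_mult)

lemma lookup_const_mult: "lookup (single 0 c * p) m = c * lookup p m"
  by (simp add: map.rep_eq when_def flip: mult_map_scale_conv_mult)

lemma Var_eq_mono: "Var v = mono (single v 1)"
  by (simp add: Var_def mono_def)

lemma mono_mult: "(mono a :: ('v, 'k::comm_ring_1) mpoly) * mono b = mono (a + b)"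
  by (simp add: mono_def mult_single)

lemma keys_mono [simp]: "keys (mono m :: ('v, 'k::zero_neq_one) mpoly) = {m}"
  by (simp add: mono_def)

lemma lookup_mono: "lookup (mono m :: ('v, 'k::zero_neq_one) mpoly) x = (if x = m then 1 else 0)"
  by (simp add: mono_def lookup_single when_def)

lemma const_mult_mono: "single 0 c * (mono m :: ('v, 'k::comm_ring_1) mpoly) = single m c"
  by (simp add: mono_def mult_single)

definition lin_ext :: "(('v \<Rightarrow>\<^sub>0 nat) \<Rightarrow> ('w, 'k::comm_ring_1) mpoly) \<Rightarrow> ('v, 'k) mpoly \<Rightarrow> ('w, 'k) mpoly" where
  "lin_ext \<phi> p = (\<Sum>m\<in>keys p. single 0 (lookup p m) * \<phi> m)"

lemma lin_ext_add: "lin_ext \<phi> (p + q) = lin_ext \<phi> p + lin_ext \<phi> q"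
  unfolding lin_ext_def by (rule setsum_keys_plus_distrib) (simp_all add: single_add distrib_right)

lemma lin_ext_diff: "lin_ext \<phi> (p - q) = lin_ext \<phi> p - lin_ext \<phi> q"
  using lin_ext_add[of \<phi> "p - q" q] by simp

lemma lin_ext_zero [simp]: "lin_ext \<phi> 0 = 0"
  by (simp add: lin_ext_def)

lemma lin_ext_zero_fun [simp]: "lin_ext (\<lambda>m. 0) p = 0"
  by (simp add: lin_ext_def)

lemma lin_ext_single [simp]: "lin_ext \<phi> (single m c) = single 0 c * \<phi> m"
  by (simp add: lin_ext_def)

lemma lin_ext_sum: "lin_ext \<phi> (\<Sum>i\<in>A. f i) = (\<Sum>i\<in>A. lin_ext \<phi> (f i))"
  by (induction A rule: infinite_finite_induct) (auto simp: lin_ext_add)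

lemma lin_ext_cong: "(\<And>m. m \<in> keys p \<Longrightarrow> \<phi> m = \<psi> m) \<Longrightarrow> lin_ext \<phi> p = lin_ext \<psi> p"
  unfolding lin_ext_def by (intro sum.cong) auto

lemma lin_ext_fun_diff: "lin_ext (\<lambda>m. \<phi> m - \<psi> m) p = lin_ext \<phi> p - lin_ext \<psi> p"
  by (simp add: lin_ext_def right_diff_distrib sum_subtractf)

lemma lin_ext_fun_mult: "lin_ext (\<lambda>m. c * \<phi> m) p = c * lin_ext \<phi> p"
  by (simp add: lin_ext_def sum_distrib_left mult_ac)

lemma lin_ext_mono [simp]: "lin_ext mono p = p"
  by (simp add: lin_ext_def const_mult_mono flip: poly_eq_sum_single)

lemma lin_ext_single_mult: "lin_ext \<phi> (single a c * f) = single 0 c * lin_ext (\<lambda>m. \<phi> (a + m)) f"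
proof -
  have "lin_ext \<phi> (single a c * f) = (\<Sum>m\<in>keys f. single 0 (c * lookup f m) * \<phi> (a + m))"
    by (simp add: single_mult_eq_sum lin_ext_sum)
  also have "\<dots> = single 0 c * lin_ext (\<lambda>m. \<phi> (a + m)) f"
    by (simp add: lin_ext_def sum_distrib_left mult_single flip: mult.assoc)
  finally show ?thesis .
qed

lemma keys_lin_ext: "keys (lin_ext \<phi> p) \<subseteq> (\<Union>m\<in>keys p. keys (\<phi> m))"
proof -
  have "keys (single 0 c * \<phi> m) \<subseteq> keys (\<phi> m)" for c m
    using keys_single_mult[of 0 c "\<phi> m"] by auto
  then show ?thesis unfolding lin_ext_def using keys_sum by fastforce
qed

lemma lin_ext_lin_ext_mono: "lin_ext \<phi> (lin_ext (\<lambda>m. mono (h m)) f) = lin_ext (\<lambda>m. \<phi> (h m)) f"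
  by (simp add: lin_ext_def[of "\<lambda>m. mono (h m)"] const_mult_mono lin_ext_sum)
    (simp add: lin_ext_def)

lemma lookup_lin_ext_mono: "lookup (lin_ext (\<lambda>Z. mono (e Z)) q) M = (\<Sum>Z\<in>{Z \<in> keys q. e Z = M}. lookup q Z)"
proof -
  have "lookup (lin_ext (\<lambda>Z. mono (e Z)) q) M = (\<Sum>Z\<in>keys q. if e Z = M then lookup q Z else 0)"
    by (simp add: lin_ext_def const_mult_mono lookup_sum lookup_single when_def eq_commute)
  then show ?thesis by (simp add: sum.inter_filter)
qed

lemma keys_lin_ext_mono: "keys (lin_ext (\<lambda>Z. mono (e Z)) q) \<subseteq> e ` keys q"
  using keys_lin_ext[of "\<lambda>Z. mono (e Z)" q] by auto

definition lin_form :: "('a \<Rightarrow> 'b::comm_ring_1) \<Rightarrow> ('a \<Rightarrow>\<^sub>0 'b) \<Rightarrow> 'b" where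
  "lin_form \<phi> p = (\<Sum>m\<in>keys p. lookup p m * \<phi> m)"

lemma lin_form_add: "lin_form \<phi> (p + q) = lin_form \<phi> p + lin_form \<phi> q"
  unfolding lin_form_def by (rule setsum_keys_plus_distrib) (simp_all add: distrib_right)

lemma lin_form_zero [simp]: "lin_form \<phi> 0 = 0"
  by (simp add: lin_form_def)

lemma lin_form_single [simp]: "lin_form \<phi> (single m c) = c * \<phi> m"
  by (simp add: lin_form_def)

lemma lin_form_sum: "lin_form \<phi> (\<Sum>i\<in>A. f i) = (\<Sum>i\<in>A. lin_form \<phi> (f i))"
  by (induction A rule: infinite_finite_induct) (auto simp: lin_form_add)

lemma lin_form_single_mult: "lin_form \<phi> (single c d * f) = d * lin_form (\<lambda>m. \<phi> (c + m)) f"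
proof -
  have "lin_form \<phi> (single c d * f) = (\<Sum>m\<in>keys f. d * lookup f m * \<phi> (c + m))"
    by (simp add: single_mult_eq_sum lin_form_sum)
  then show ?thesis by (simp add: lin_form_def sum_distrib_left mult.assoc)
qed

lemma lookup_pfilter: "lookup (pfilter P f) m = (if P m then lookup f m else 0)"
  unfolding pfilter_def lookup_sum_single by (auto simp: in_keys_iff)

lemma keys_pfilter: "keys (pfilter P f) = {m \<in> keys f. P m}"
  by (auto simp: in_keys_iff lookup_pfilter split: if_splits)

lemma pfilter_add: "pfilter P (f + g) = pfilter P f + pfilter P g"
  by (rule poly_mapping_eqI) (simp add: lookup_pfilter lookup_add)

lemma pfilter_zero [simp]: "pfilter P 0 = 0"
  by (simp add: pfilter_def)

lemma pfilter_all: "(\<And>m. m \<in> keys f \<Longrightarrow> P m) \<Longrightarrow> pfilter P f = f"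
  by (rule poly_mapping_eqI) (auto simp: lookup_pfilter in_keys_iff)

lemma pfilter_none: "(\<And>m. m \<in> keys f \<Longrightarrow> \<not> P m) \<Longrightarrow> pfilter P f = 0"
  by (rule poly_mapping_eqI) (auto simp: lookup_pfilter in_keys_iff)

lemma polys_in_add: "p \<in> polys_in V \<Longrightarrow> q \<in> polys_in V \<Longrightarrow> p + q \<in> polys_in V"
  unfolding polys_in_def using keys_add[of p q] by blast

lemma polys_in_minus: "p \<in> polys_in V \<Longrightarrow> q \<in> polys_in V \<Longrightarrow> p - q \<in> polys_in V"
  unfolding polys_in_def using keys_diff[of p q] by blast

lemma polys_in_mult: "p \<in> polys_in V \<Longrightarrow> q \<in> polys_in V \<Longrightarrow> p * q \<in> polys_in V"
  unfolding polys_in_def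
proof safe
  fix m v assume p: "\<forall>m\<in>keys p. keys m \<subseteq> V" and q: "\<forall>m\<in>keys q. keys m \<subseteq> V"
    and m: "m \<in> keys (p * q)" and v: "v \<in> keys m"
  from m keys_mult obtain a b where "m = a + b" "a \<in> keys p" "b \<in> keys q" by blast
  with v p q show "v \<in> V" using keys_add[of a b] by (meson UnE subsetD)
qed

lemma polys_in_single: "keys m \<subseteq> V \<Longrightarrow> single m c \<in> polys_in V"
  unfolding polys_in_def by auto

lemma polys_in_mono: "keys m \<subseteq> V \<Longrightarrow> mono m \<in> polys_in V"
  unfolding mono_def by (rule polys_in_single)

lemma polys_in_zero [simp]: "0 \<in> polys_in V"
  by (simp add: polys_in_def)

lemma polys_in_sum: "(\<And>i. i \<in> A \<Longrightarrow> f i \<in> polys_in V) \<Longrightarrow> (\<Sum>i\<in>A. f i) \<in> polys_in V"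
  by (induction A rule: infinite_finite_induct) (auto intro: polys_in_add)

lemma polys_in_pfilter: "p \<in> polys_in V \<Longrightarrow> pfilter P p \<in> polys_in V"
  by (auto simp: polys_in_def keys_pfilter)

lemma ideal_gen_base: "S \<subseteq> ideal_gen R S"
  unfolding ideal_gen_def by auto

lemma ideal_gen_least: "is_ideal R K \<Longrightarrow> S \<subseteq> K \<Longrightarrow> ideal_gen R S \<subseteq> K"
  unfolding ideal_gen_def by auto

lemma ideal_gen_mono: "S \<subseteq> S' \<Longrightarrow> ideal_gen R S \<subseteq> ideal_gen R S'"
  unfolding ideal_gen_def by auto

lemma is_ideal_polys_in: "is_ideal (polys_in V) (polys_in V)"
  unfolding is_ideal_def by (auto intro: polys_in_add polys_in_mult simp del: polys_in_def)

lemma ideal_gen_is_ideal: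
  assumes "S \<subseteq> polys_in V"
  shows "is_ideal (polys_in V) (ideal_gen (polys_in V) S)"
proof -
  let ?F = "{J. is_ideal (polys_in V) J \<and> S \<subseteq> J}"
  have "polys_in V \<in> ?F" using assms is_ideal_polys_in by auto
  then have "is_ideal (polys_in V) (\<Inter> ?F)"
    unfolding is_ideal_def[of _ "\<Inter> ?F"] by (auto simp: is_ideal_def)
  then show ?thesis unfolding ideal_gen_def .
qed

context
  fixes V :: "'v set" and K :: "('v, 'k::comm_ring_1) mpoly set"
  assumes K: "is_ideal (polys_in V) K"
begin

lemma ideal_subset: "K \<subseteq> polys_in V" using K by (simp add: is_ideal_def)
lemma ideal_zero: "0 \<in> K" using K by (simp add: is_ideal_def)
lemma ideal_add: "a \<in> K \<Longrightarrow> b \<in> K \<Longrightarrow> a + b \<in> K" using K by (simp add: is_ideal_def)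
lemma ideal_mult: "a \<in> polys_in V \<Longrightarrow> b \<in> K \<Longrightarrow> a * b \<in> K" using K by (simp add: is_ideal_def)

lemma ideal_mult_right: "a \<in> K \<Longrightarrow> b \<in> polys_in V \<Longrightarrow> a * b \<in> K"
  using ideal_mult[of b a] by (simp add: mult.commute)

lemma ideal_const_mult: "b \<in> K \<Longrightarrow> single 0 c * b \<in> K"
  by (rule ideal_mult) (simp add: polys_in_single)

lemma ideal_term_mult: "keys m \<subseteq> V \<Longrightarrow> b \<in> K \<Longrightarrow> single m c * b \<in> K"
  by (rule ideal_mult[OF polys_in_single])

lemma ideal_uminus: "b \<in> K \<Longrightarrow> - b \<in> K"
  using ideal_const_mult[of b "-1"] by (simp add: single_uminus)

lemma ideal_minus: "a \<in> K \<Longrightarrow> b \<in> K \<Longrightarrow> a - b \<in> K"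
  using ideal_add[of a "-b"] ideal_uminus[of b] by simp

lemma ideal_sum: "(\<And>i. i \<in> A \<Longrightarrow> f i \<in> K) \<Longrightarrow> (\<Sum>i\<in>A. f i) \<in> K"
  by (induction A rule: infinite_finite_induct) (auto intro: ideal_add ideal_zero)

end

lemma lin_ext_in_ideal:
  assumes "is_ideal (polys_in V) K" and "\<And>m. m \<in> keys p \<Longrightarrow> \<phi> m \<in> K"
  shows "lin_ext \<phi> p \<in> K"
  unfolding lin_ext_def using assms by (intro ideal_sum[OF assms(1)] ideal_const_mult[OF assms(1)]) auto

lemma lin_ext_congruent_in_ideal:
  assumes K: "is_ideal (polys_in V) K" and "lin_ext \<psi> p \<in> K"
    and "\<And>m. m \<in> keys p \<Longrightarrow> \<phi> m - \<psi> m \<in> K"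
  shows "lin_ext \<phi> p \<in> K"
proof -
  have "lin_ext \<phi> p = lin_ext \<psi> p + lin_ext (\<lambda>m. \<phi> m - \<psi> m) p" by (simp add: lin_ext_fun_diff)
  then show ?thesis using assms by (simp add: ideal_add lin_ext_in_ideal)
qed

lemma is_ideal_polys_inI:
  fixes S :: "('v, 'k::comm_ring_1) mpoly set"
  assumes "S \<subseteq> polys_in V" "0 \<in> S" "\<And>a b. a \<in> S \<Longrightarrow> b \<in> S \<Longrightarrow> a + b \<in> S"
    and term_mult: "\<And>x c b. keys x \<subseteq> V \<Longrightarrow> c \<noteq> 0 \<Longrightarrow> b \<in> S \<Longrightarrow> single x c * b \<in> S"
  shows "is_ideal (polys_in V) S"
  unfolding is_ideal_def
proof (intro conjI ballI)
  fix a b :: "('v, 'k) mpoly" assume a: "a \<in> polys_in V" and b: "b \<in> S"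
  have "(\<Sum>x\<in>A. single x (lookup a x) * b) \<in> S" if "A \<subseteq> keys a" for A
    using that
  proof (induction A rule: infinite_finite_induct)
    case (insert x A)
    have "keys x \<subseteq> V" "lookup a x \<noteq> 0"
      using insert.prems a by (auto simp: polys_in_def in_keys_iff)
    then have "single x (lookup a x) * b \<in> S" using b by (rule term_mult)
    then show ?case using insert by (simp add: assms(3))
  qed (simp_all add: assms(2))
  then show "a * b \<in> S" by (simp add: mult_eq_sum_terms[of a b])
qed (use assms in auto)

lemma mweight_add: "mweight \<nu> (a + b) = mweight \<nu> a + mweight \<nu> b"
  unfolding mweight_def by (rule setsum_keys_plus_distrib) (simp_all add: distrib_right)

lemma mweight_zero [simp]: "mweight \<nu> 0 = 0"
  by (simp add: mweight_def)

lemma mweight_single [simp]: "mweight \<nu> (single v n) = real n * \<nu> v"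
  by (simp add: mweight_def)

lemma mweight_sum: "mweight \<nu> (\<Sum>i\<in>A. f i) = (\<Sum>i\<in>A. mweight \<nu> (f i))"
  by (induction A rule: infinite_finite_induct) (auto simp: mweight_add)

definition maxw :: "('v \<Rightarrow> real) \<Rightarrow> ('v, 'k::zero) mpoly \<Rightarrow> real" where
  "maxw \<nu> f = Max (mweight \<nu> ` keys f)"

lemma init_eq: "init \<nu> f = pfilter (\<lambda>m. mweight \<nu> m = maxw \<nu> f) f"
  by (simp add: init_def maxw_def)

lemma maxw_ge: "m \<in> keys f \<Longrightarrow> mweight \<nu> m \<le> maxw \<nu> f"
  unfolding maxw_def by simp

lemma maxw_attained: "f \<noteq> 0 \<Longrightarrow> \<exists>m\<in>keys f. mweight \<nu> m = maxw \<nu> f"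
  unfolding maxw_def
  by (metis (no_types, lifting) Max_in finite_imageI finite_keys image_iff image_is_empty keys_eq_empty)

lemma maxw_eqI:
  "m \<in> keys f \<Longrightarrow> (\<And>m'. m' \<in> keys f \<Longrightarrow> mweight \<nu> m' \<le> mweight \<nu> m) \<Longrightarrow> maxw \<nu> f = mweight \<nu> m"
  unfolding maxw_def by (intro Max_eqI) auto

lemma lookup_init: "lookup (init \<nu> f) m = (if mweight \<nu> m = maxw \<nu> f then lookup f m else 0)"
  by (simp add: init_eq lookup_pfilter)

lemma keys_init: "keys (init \<nu> f) = {m \<in> keys f. mweight \<nu> m = maxw \<nu> f}"
  by (simp add: init_eq keys_pfilter)

lemma init_zero [simp]: "init \<nu> 0 = 0"
  by (simp add: init_eq)

lemma init_in_polys_in: "f \<in> polys_in V \<Longrightarrow> init \<nu> f \<in> polys_in V"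
  by (simp add: init_eq polys_in_pfilter)

lemma init_const_weight:
  assumes "\<And>m. m \<in> keys q \<Longrightarrow> mweight \<nu> m = c"
  shows "init \<nu> q = q"
proof (cases "q = 0")
  case False
  then obtain m where "m \<in> keys q" "mweight \<nu> m = maxw \<nu> q" using maxw_attained by blast
  then have "maxw \<nu> q = c" using assms by simp
  then show ?thesis unfolding init_eq by (intro pfilter_all) (simp add: assms)
qed simp

lemma init_single_mult:
  fixes c :: "'k::field"
  assumes c: "c \<noteq> 0"
  shows "init \<nu> (single a c * f) = single a c * init \<nu> f"
proof (cases "f = 0")
  case False
  then obtain m0 where m0: "m0 \<in> keys f" "mweight \<nu> m0 = maxw \<nu> f" using maxw_attained by blast
  have "maxw \<nu> (single a c * f) = mweight \<nu> (a + m0)"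
  proof (rule maxw_eqI)
    show "a + m0 \<in> keys (single a c * f)" using m0 c by (simp add: keys_single_mult_eq)
    fix m' assume "m' \<in> keys (single a c * f)"
    then obtain m where "m \<in> keys f" "m' = a + m" using keys_single_mult_eq[OF c] by blast
    then show "mweight \<nu> m' \<le> mweight \<nu> (a + m0)" using maxw_ge[of m f \<nu>] m0 by (simp add: mweight_add)
  qed
  then have maxw_mult: "maxw \<nu> (single a c * f) = mweight \<nu> a + maxw \<nu> f"
    using m0 by (simp add: mweight_add)
  show ?thesis
  proof (rule poly_mapping_eqI)
    fix x
    show "lookup (init \<nu> (single a c * f)) x = lookup (single a c * init \<nu> f) x"
    proof (cases "\<exists>m. x = a + m")
      case True
      then obtain m where x: "x = a + m" by blast
      show ?thesis unfolding x lookup_single_mult lookup_init maxw_mult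
        by (simp add: mweight_add lookup_single_mult)
    qed (simp add: lookup_init lookup_single_mult_notin)
  qed
qed simp

lemma init_lin_ext_mono:
  assumes shift: "\<And>Z. Z \<in> keys h \<Longrightarrow> mweight \<mu> (e Z) = mweight \<nu> Z + c"
    and nonzero: "lin_ext (\<lambda>Z. mono (e Z)) (init \<nu> h) \<noteq> 0"
  shows "init \<mu> (lin_ext (\<lambda>Z. mono (e Z)) h) = lin_ext (\<lambda>Z. mono (e Z)) (init \<nu> h)"
proof -
  let ?E = "lin_ext (\<lambda>Z. mono (e Z))"
  define W where "W = maxw \<nu> h"
  have lookup_E_init: "lookup (?E (init \<nu> h)) M = (if mweight \<mu> M = W + c then lookup (?E h) M else 0)"
    for M
  proof -
    have "lookup (?E (init \<nu> h)) M = (\<Sum>Z\<in>{Z \<in> keys h. e Z = M \<and> mweight \<nu> Z = W}. lookup h Z)"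
      unfolding lookup_lin_ext_mono by (intro sum.cong) (auto simp: keys_init lookup_init W_def)
    also have "\<dots> = (if mweight \<mu> M = W + c then lookup (?E h) M else 0)"
      unfolding lookup_lin_ext_mono using shift by (auto intro!: sum.cong sum.neutral)
    finally show ?thesis .
  qed
  from nonzero obtain M where M: "lookup (?E (init \<nu> h)) M \<noteq> 0"
    by (metis poly_mapping_eqI lookup_zero)
  then have wM: "mweight \<mu> M = W + c" and Mk: "M \<in> keys (?E h)"
    by (auto simp: lookup_E_init in_keys_iff split: if_splits)
  have "maxw \<mu> (?E h) = W + c"
  proof -
    have "mweight \<mu> M' \<le> W + c" if "M' \<in> keys (?E h)" for M'
      using that keys_lin_ext_mono shift maxw_ge[of _ h \<nu>] by (fastforce simp: W_def)
    then show ?thesis using maxw_eqI[OF Mk] wM by simp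
  qed
  then show ?thesis by (intro poly_mapping_eqI) (simp add: lookup_E_init lookup_init)
qed

definition weight_comp :: "('v \<Rightarrow> real) \<Rightarrow> real \<Rightarrow> ('v, 'k::comm_monoid_add) mpoly \<Rightarrow> ('v, 'k) mpoly" where
  "weight_comp \<nu> w p = pfilter (\<lambda>m. mweight \<nu> m = w) p"

lemma keys_weight_comp: "keys (weight_comp \<nu> w p) = {m \<in> keys p. mweight \<nu> m = w}"
  by (simp add: weight_comp_def keys_pfilter)

lemma weight_comp_add: "weight_comp \<nu> w (p + q) = weight_comp \<nu> w p + weight_comp \<nu> w q"
  by (simp add: weight_comp_def pfilter_add)

lemma weight_comp_zero [simp]: "weight_comp \<nu> w 0 = 0"
  by (simp add: weight_comp_def)

lemma weight_comp_init: "weight_comp \<nu> w (init \<nu> f) = (if w = maxw \<nu> f then init \<nu> f else 0)"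
  unfolding weight_comp_def by (auto intro: pfilter_all pfilter_none simp: keys_init)

lemma weight_comp_single_mult:
  "weight_comp \<nu> w (single a c * p) = single a c * weight_comp \<nu> (w - mweight \<nu> a) p"
proof (rule poly_mapping_eqI)
  fix x
  show "lookup (weight_comp \<nu> w (single a c * p)) x = lookup (single a c * weight_comp \<nu> (w - mweight \<nu> a) p) x"
  proof (cases "\<exists>m. x = a + m")
    case True
    then obtain m where x: "x = a + m" by blast
    show ?thesis unfolding x weight_comp_def lookup_pfilter lookup_single_mult by (auto simp: mweight_add)
  qed (simp add: weight_comp_def lookup_pfilter lookup_single_mult_notin)
qed

definition multiples :: "('v \<Rightarrow>\<^sub>0 nat) set \<Rightarrow> 'v set \<Rightarrow> ('v, 'k::comm_ring_1) mpoly set" where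
  "multiples M V = {p \<in> polys_in V. \<forall>m\<in>keys p. \<exists>m0\<in>M. \<exists>d. m = m0 + d}"

lemma multiples_ideal: "is_ideal (polys_in V) (multiples M V :: ('v, 'k::comm_ring_1) mpoly set)"
proof (rule is_ideal_polys_inI)
  fix a b :: "('v, 'k) mpoly" assume "a \<in> multiples M V" "b \<in> multiples M V"
  then show "a + b \<in> multiples M V" using keys_add[of a b] by (auto simp: multiples_def intro: polys_in_add)
next
  fix x :: "'v \<Rightarrow>\<^sub>0 nat" and c :: 'k and b :: "('v, 'k) mpoly"
  assume x: "keys x \<subseteq> V" and b: "b \<in> multiples M V"
  have "\<exists>m0\<in>M. \<exists>d. m = m0 + d" if "m \<in> keys (single x c * b)" for m
  proof -
    from that obtain y where "y \<in> keys b" "m = x + y" using keys_single_mult by blast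
    moreover from b \<open>y \<in> keys b\<close> obtain m0 d where "m0 \<in> M" "y = m0 + d"
      by (auto simp: multiples_def)
    ultimately have "m = m0 + (d + x)" by (simp add: ac_simps)
    with \<open>m0 \<in> M\<close> show ?thesis by blast
  qed
  then show "single x c * b \<in> multiples M V"
    using x b by (auto simp: multiples_def intro: polys_in_mult polys_in_single)
qed (auto simp: multiples_def)

lemma monomial_ideal_keys:
  fixes K :: "('v, 'k::comm_ring_1) mpoly set"
  assumes "monomial_ideal (polys_in V) K" and p: "p \<in> K" and m: "m \<in> keys p"
  shows "mono m \<in> K"
proof -
  from assms(1) obtain M where MR: "mono ` M \<subseteq> (polys_in V :: ('v, 'k) mpoly set)"
    and K: "K = ideal_gen (polys_in V) (mono ` M)"
    unfolding monomial_ideal_def by blast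
  have "mono ` M \<subseteq> (multiples M V :: ('v, 'k) mpoly set)" using MR by (force simp: multiples_def)
  then have "p \<in> multiples M V" using p K ideal_gen_least[OF multiples_ideal] by blast
  with m obtain m0 d where m0: "m0 \<in> M" and md: "m = m0 + d" and "keys m \<subseteq> V"
    by (auto simp: multiples_def polys_in_def)
  then have "keys d \<subseteq> V" by (auto simp: in_keys_iff lookup_add)
  moreover have "mono m0 \<in> K" unfolding K using m0 ideal_gen_base by blast
  ultimately have "mono d * mono m0 \<in> K"
    unfolding K by (intro ideal_mult[OF ideal_gen_is_ideal[OF MR]] polys_in_mono)
  then show ?thesis by (simp add: mono_mult md add.commute)
qed

section \<open>Normal forms modulo an ideal with monomial initial ideal\<close>

text \<open>The weight \<open>\<omega>\<close> need not be a term order; reduction modulo \<open>I\<close> terminates only because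
  \<open>I\<close> is homogeneous and each degree contains finitely many monomials.\<close>

locale weighted_ideal =
  fixes V :: "'v set" and I :: "('v, 'k::field) mpoly set" and \<omega> :: "'v \<Rightarrow> real"
    and deg :: "('v \<Rightarrow>\<^sub>0 nat) \<Rightarrow> 'D"
  assumes ideal: "is_ideal (polys_in V) I"
    and monomial_init_ideal: "monomial_ideal (polys_in V) (init_ideal (polys_in V) \<omega> I)"
    and homogeneous: "\<And>f D. f \<in> I \<Longrightarrow> pfilter (\<lambda>m. deg m = D) f \<in> I"
    and finite_degree: "\<And>D. finite {m. keys m \<subseteq> V \<and> deg m = D}"
begin

abbreviation "inI \<equiv> init_ideal (polys_in V) \<omega> I"
abbreviation "wt \<equiv> mweight \<omega>"

lemma ideal_subset_polys: "I \<subseteq> polys_in V"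
  by (rule ideal_subset[OF ideal])

lemma init_in_init_ideal: "f \<in> I \<Longrightarrow> init \<omega> f \<in> inI"
  unfolding init_ideal_def using ideal_gen_base by blast

definition standard :: "('v \<Rightarrow>\<^sub>0 nat) \<Rightarrow> bool" where
  "standard m \<longleftrightarrow> (mono m :: ('v, 'k) mpoly) \<notin> inI"

lemma standard_supported_eq_0:
  assumes p: "p \<in> I" and standard: "\<And>m. m \<in> keys p \<Longrightarrow> standard m"
  shows "p = 0"
proof (rule ccontr)
  assume "p \<noteq> 0"
  then obtain m where m: "m \<in> keys p" "wt m = maxw \<omega> p" using maxw_attained by blast
  then have "m \<in> keys (init \<omega> p)" by (simp add: keys_init)
  then have "mono m \<in> inI"
    using monomial_ideal_keys[OF monomial_init_ideal init_in_init_ideal[OF p]] by blast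
  with standard[OF m(1)] show False by (simp add: standard_def)
qed

lemma init_add_same_weight:
  assumes f: "f \<in> I" and g: "g \<in> I"
    and wf: "\<And>m. m \<in> keys (init \<omega> f) \<Longrightarrow> wt m = w"
    and wg: "\<And>m. m \<in> keys (init \<omega> g) \<Longrightarrow> wt m = w"
  shows "init \<omega> f + init \<omega> g \<in> init \<omega> ` I"
proof (cases "f = 0 \<or> g = 0 \<or> init \<omega> f + init \<omega> g = 0")
  case True
  then show ?thesis using f g ideal_zero[OF ideal] by (auto intro: image_eqI[where x = 0])
next
  case False
  then have f0: "f \<noteq> 0" and g0: "g \<noteq> 0" and s0: "init \<omega> f + init \<omega> g \<noteq> 0" by auto
  have mf: "maxw \<omega> f = w"
    using maxw_attained[OF f0] wf keys_init by (metis (mono_tags, lifting) mem_Collect_eq)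
  have mg: "maxw \<omega> g = w"
    using maxw_attained[OF g0] wg keys_init by (metis (mono_tags, lifting) mem_Collect_eq)
  have lookup_init_add: "lookup (init \<omega> f + init \<omega> g) m = (if wt m = w then lookup (f + g) m else 0)" for m
    by (simp add: lookup_add lookup_init mf mg)
  from s0 obtain m where "m \<in> keys (init \<omega> f + init \<omega> g)" by (metis keys_eq_empty ex_in_conv)
  then have "wt m = w" and mk: "m \<in> keys (f + g)"
    using lookup_init_add[of m] by (auto simp: in_keys_iff split: if_splits)
  moreover have "wt m' \<le> w" if "m' \<in> keys (f + g)" for m'
    using that keys_add[of f g] maxw_ge[of m' f \<omega>] maxw_ge[of m' g \<omega>] mf mg by auto
  ultimately have "maxw \<omega> (f + g) = w" using maxw_eqI[OF mk, of \<omega>] by auto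
  then have "init \<omega> (f + g) = init \<omega> f + init \<omega> g"
    by (intro poly_mapping_eqI) (simp add: lookup_init_add lookup_init)
  then show ?thesis using ideal_add[OF ideal f g] by (metis image_eqI)
qed

lemma zero_in_inits: "0 \<in> init \<omega> ` I"
  using image_eqI[of 0 "init \<omega>" 0 I] ideal_zero[OF ideal] by simp

text \<open>The initial ideal consists of the polynomials all of whose weight components are
  initial forms; in particular a monomial in it is itself an initial form.\<close>

definition init_components :: "('v, 'k) mpoly set" where
  "init_components = {p \<in> polys_in V. \<forall>w. weight_comp \<omega> w p \<in> init \<omega> ` I}"

lemma init_components_ideal: "is_ideal (polys_in V) init_components"
proof (rule is_ideal_polys_inI)
  show "init_components \<subseteq> polys_in V" by (simp add: init_components_def)
  show "0 \<in> init_components" by (simp add: init_components_def zero_in_inits)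
next
  fix a b assume a: "a \<in> init_components" and b: "b \<in> init_components"
  have "weight_comp \<omega> w (a + b) \<in> init \<omega> ` I" for w
  proof -
    from a obtain f where f: "f \<in> I" "weight_comp \<omega> w a = init \<omega> f"
      unfolding init_components_def by blast
    from b obtain g where g: "g \<in> I" "weight_comp \<omega> w b = init \<omega> g"
      unfolding init_components_def by blast
    have "init \<omega> f + init \<omega> g \<in> init \<omega> ` I"
      using f g by (intro init_add_same_weight) (simp_all flip: f(2) g(2) add: keys_weight_comp)
    then show ?thesis using f(2) g(2) by (simp add: weight_comp_add)
  qed
  then show "a + b \<in> init_components"
    using a b by (simp add: init_components_def polys_in_add)
next
  fix x :: "'v \<Rightarrow>\<^sub>0 nat" and c :: 'k and b
  assume x: "keys x \<subseteq> V" and c: "c \<noteq> 0" and b: "b \<in> init_components"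
  have "weight_comp \<omega> w (single x c * b) \<in> init \<omega> ` I" for w
  proof -
    from b obtain f where f: "f \<in> I" "weight_comp \<omega> (w - wt x) b = init \<omega> f"
      unfolding init_components_def by blast
    have "weight_comp \<omega> w (single x c * b) = init \<omega> (single x c * f)"
      by (simp add: weight_comp_single_mult f(2) init_single_mult[OF c])
    then show ?thesis using ideal_term_mult[OF ideal x f(1)] by simp
  qed
  then show "single x c * b \<in> init_components"
    using x b by (simp add: init_components_def polys_in_mult polys_in_single)
qed

lemma mono_in_init_ideal_is_init:
  assumes "mono m \<in> inI"
  obtains f where "f \<in> I" "init \<omega> f = mono m"
proof -
  have "init \<omega> ` I \<subseteq> init_components"
    using ideal_subset_polys zero_in_inits
    by (auto simp: init_components_def weight_comp_init init_in_polys_in)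
  then have "inI \<subseteq> init_components"
    unfolding init_ideal_def by (rule ideal_gen_least[OF init_components_ideal])
  with assms have "weight_comp \<omega> (wt m) (mono m) \<in> init \<omega> ` I"
    by (auto simp: init_components_def)
  moreover have "weight_comp \<omega> (wt m) (mono m :: ('v, 'k) mpoly) = mono m"
    unfolding weight_comp_def by (rule pfilter_all) simp
  ultimately show ?thesis using that by auto
qed

lemma reduction_step:
  assumes "\<not> standard m"
  obtains q where "mono m - q \<in> I"
    and "\<And>m'. m' \<in> keys q \<Longrightarrow> wt m' < wt m \<and> keys m' \<subseteq> V \<and> deg m' = deg m"
proof -
  obtain f where f: "f \<in> I" "init \<omega> f = mono m"
    using assms mono_in_init_ideal_is_init by (auto simp: standard_def)
  define fD where "fD = pfilter (\<lambda>m'. deg m' = deg m) f"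
  have fD: "fD \<in> I" unfolding fD_def using f(1) by (rule homogeneous)
  have lookup_init_f: "lookup (init \<omega> f) x = (if x = m then 1 else 0)" for x
    using f(2) by (simp add: lookup_mono)
  have wm: "wt m = maxw \<omega> f" and fm: "lookup f m = 1"
    using lookup_init_f[of m] by (auto simp: lookup_init split: if_splits)
  have "mono m - (mono m - fD) \<in> I" using fD by simp
  moreover have "wt m' < wt m \<and> keys m' \<subseteq> V \<and> deg m' = deg m" if "m' \<in> keys (mono m - fD)" for m'
  proof -
    have "lookup (mono m - fD) m = 0"
      by (simp add: fD_def lookup_minus lookup_mono lookup_pfilter fm)
    then have "m' \<noteq> m" "m' \<in> keys fD"
      using that by (auto simp: in_keys_iff lookup_minus lookup_mono split: if_splits)
    then have "m' \<in> keys f" "deg m' = deg m" by (auto simp: fD_def keys_pfilter)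
    moreover have "keys m' \<subseteq> V"
      using fD ideal_subset_polys \<open>m' \<in> keys fD\<close> by (auto simp: polys_in_def)
    moreover have "wt m' \<noteq> wt m"
      using lookup_init_f[of m'] \<open>m' \<noteq> m\<close> \<open>m' \<in> keys f\<close> wm by (auto simp: lookup_init in_keys_iff)
    ultimately show ?thesis using maxw_ge[of m' f \<omega>] wm by simp
  qed
  ultimately show ?thesis by (rule that)
qed

definition normal_form_rel :: "('v \<Rightarrow>\<^sub>0 nat) \<Rightarrow> ('v, 'k) mpoly \<Rightarrow> bool" where
  "normal_form_rel m q \<longleftrightarrow> (\<forall>m'\<in>keys q. standard m') \<and> mono m - q \<in> I
      \<and> (standard m \<longrightarrow> q = mono m) \<and> (\<not> standard m \<longrightarrow> (\<forall>m'\<in>keys q. wt m' < wt m))"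

lemma normal_form_rel_weight: "normal_form_rel m q \<Longrightarrow> m' \<in> keys q \<Longrightarrow> wt m' \<le> wt m"
  unfolding normal_form_rel_def by (cases "standard m") (auto simp: less_imp_le)

lemma normal_form_rel_reduce:
  assumes "\<not> standard m" and q0: "mono m - q0 \<in> I" and below: "\<And>m'. m' \<in> keys q0 \<Longrightarrow> wt m' < wt m"
    and Q: "\<And>m'. m' \<in> keys q0 \<Longrightarrow> normal_form_rel m' (Q m')"
  shows "normal_form_rel m (lin_ext Q q0)"
proof -
  have "mono m - lin_ext Q q0 = (mono m - q0) + lin_ext (\<lambda>m'. mono m' - Q m') q0"
    by (simp add: lin_ext_fun_diff)
  also have "\<dots> \<in> I"
    using Q q0 by (intro ideal_add[OF ideal] lin_ext_in_ideal[OF ideal]) (auto simp: normal_form_rel_def)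
  finally have "mono m - lin_ext Q q0 \<in> I" .
  moreover have "standard m' \<and> wt m' < wt m" if m': "m' \<in> keys (lin_ext Q q0)" for m'
  proof -
    obtain m'' where m'': "m'' \<in> keys q0" "m' \<in> keys (Q m'')" using m' keys_lin_ext by blast
    have "standard m'" using Q[OF m''(1)] m''(2) unfolding normal_form_rel_def by blast
    moreover have "wt m' \<le> wt m''" by (rule normal_form_rel_weight[OF Q[OF m''(1)] m''(2)])
    ultimately show ?thesis using below[OF m''(1)] by simp
  qed
  ultimately show ?thesis using assms(1) unfolding normal_form_rel_def by blast
qed

lemma normal_form_exists: "\<exists>q. normal_form_rel m q"
proof (induction "card {m' \<in> {x. keys x \<subseteq> V \<and> deg x = deg m}. wt m' < wt m}"
    arbitrary: m rule: less_induct)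
  case less
  show ?case
  proof (cases "standard m")
    case True
    then show ?thesis
      by (intro exI[of _ "mono m"]) (simp add: normal_form_rel_def ideal_zero[OF ideal])
  next
    case False
    then obtain q0 where q0: "mono m - q0 \<in> I"
      and below: "\<And>m'. m' \<in> keys q0 \<Longrightarrow> wt m' < wt m \<and> keys m' \<subseteq> V \<and> deg m' = deg m"
      using reduction_step by blast
    have fin: "finite {x \<in> {x. keys x \<subseteq> V \<and> deg x = deg m}. wt x < wt m}"
      using finite_degree[of "deg m"] by (rule rev_finite_subset) auto
    have exists_below: "\<exists>q. normal_form_rel m' q" if m': "m' \<in> keys q0" for m'
    proof (rule less.hyps)
      have "{x \<in> {x. keys x \<subseteq> V \<and> deg x = deg m'}. wt x < wt m'}
          \<subset> {x \<in> {x. keys x \<subseteq> V \<and> deg x = deg m}. wt x < wt m}"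
        using below[OF m'] by auto
      then show "card {x \<in> {x. keys x \<subseteq> V \<and> deg x = deg m'}. wt x < wt m'}
          < card {x \<in> {x. keys x \<subseteq> V \<and> deg x = deg m}. wt x < wt m}"
        by (rule psubset_card_mono[OF fin])
    qed
    define Q where "Q m' = (SOME q. normal_form_rel m' q)" for m'
    have "normal_form_rel m' (Q m')" if "m' \<in> keys q0" for m'
      unfolding Q_def using exists_below[OF that] by (rule someI_ex)
    then have "normal_form_rel m (lin_ext Q q0)"
      using below by (intro normal_form_rel_reduce[OF False q0]) blast+
    then show ?thesis ..
  qed
qed

definition normal_form :: "('v \<Rightarrow>\<^sub>0 nat) \<Rightarrow> ('v, 'k) mpoly" where
  "normal_form m = (SOME q. normal_form_rel m q)"

lemma normal_form: "normal_form_rel m (normal_form m)"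
  unfolding normal_form_def using normal_form_exists by (rule someI_ex)

lemma normal_form_standard: "standard u \<Longrightarrow> normal_form u = mono u"
  using normal_form[of u] by (simp add: normal_form_rel_def)

lemma keys_normal_form:
  assumes "u \<in> keys (normal_form m)"
  shows "standard u \<and> wt u \<le> wt m \<and> (wt u = wt m \<longrightarrow> u = m)"
  using normal_form[of m] assms by (cases "standard m") (auto simp: normal_form_rel_def)

lemma normal_form_coeff_annihilates:
  assumes f: "f \<in> I"
  shows "lin_form (\<lambda>m. lookup (normal_form m) u) f = 0"
proof -
  have "f - lin_ext normal_form f = lin_ext (\<lambda>m. mono m - normal_form m) f"
    by (simp add: lin_ext_fun_diff)
  also have "\<dots> \<in> I"
    using normal_form by (intro lin_ext_in_ideal[OF ideal]) (simp add: normal_form_rel_def)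
  finally have "f - (f - lin_ext normal_form f) \<in> I" by (rule ideal_minus[OF ideal f])
  then have "lin_ext normal_form f \<in> I" by simp
  moreover have "standard x" if "x \<in> keys (lin_ext normal_form f)" for x
    using that keys_lin_ext keys_normal_form by blast
  ultimately have "lin_ext normal_form f = 0" by (rule standard_supported_eq_0)
  then have "lookup (lin_ext normal_form f) u = 0" by simp
  then show ?thesis by (simp add: lin_ext_def lin_form_def lookup_sum lookup_const_mult)
qed

lemma annihilator_shift:
  assumes "keys c \<subseteq> V" and "\<forall>f\<in>I. lin_form \<phi> f = 0"
  shows "\<forall>f\<in>I. lin_form (\<lambda>m. \<phi> (c + m)) f = 0"
proof
  fix f assume "f \<in> I"
  with assms(1) have "single c 1 * f \<in> I" by (rule ideal_term_mult[OF ideal])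
  then show "lin_form (\<lambda>m. \<phi> (c + m)) f = 0" using assms(2) lin_form_single_mult[of \<phi> c 1 f] by simp
qed

end

definition pm_image :: "('a \<Rightarrow> 'b) \<Rightarrow> ('a \<Rightarrow>\<^sub>0 nat) \<Rightarrow> ('b \<Rightarrow>\<^sub>0 nat)" where
  "pm_image f u = (\<Sum>v\<in>keys u. single (f v) (lookup u v))"

lemma pm_image_add: "pm_image f (a + b) = pm_image f a + pm_image f b"
  unfolding pm_image_def by (rule setsum_keys_plus_distrib) (simp_all add: single_add)

lemma pm_image_zero [simp]: "pm_image f 0 = 0"
  by (simp add: pm_image_def)

lemma pm_image_single [simp]: "pm_image f (single v n) = single (f v) n"
  by (simp add: pm_image_def)

lemma pm_image_sum: "pm_image f (\<Sum>i\<in>A. g i) = (\<Sum>i\<in>A. pm_image f (g i))"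
  by (induction A rule: infinite_finite_induct) (auto simp: pm_image_add)

lemma pm_image_comp: "pm_image g (pm_image f u) = pm_image (g \<circ> f) u"
  by (simp add: pm_image_def[of f] pm_image_sum) (simp add: pm_image_def)

lemma lookup_pm_image: "lookup (pm_image f u) w = (\<Sum>v\<in>{v \<in> keys u. f v = w}. lookup u v)"
proof -
  have "lookup (pm_image f u) w = (\<Sum>v\<in>keys u. if f v = w then lookup u v else 0)"
    by (simp add: pm_image_def lookup_sum lookup_single when_def eq_commute)
  then show ?thesis by (simp add: sum.inter_filter)
qed

lemma lookup_pm_image_inj: "inj f \<Longrightarrow> lookup (pm_image f u) (f v) = lookup u v"
proof -
  assume "inj f"
  then have "{x \<in> keys u. f x = f v} = (if v \<in> keys u then {v} else {})" by (auto dest: injD)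
  then show ?thesis by (auto simp: lookup_pm_image in_keys_iff)
qed

lemma lookup_pm_image_notin: "w \<notin> range f \<Longrightarrow> lookup (pm_image f u) w = 0"
  by (auto simp: lookup_pm_image intro: sum.neutral)

lemma keys_pm_image: "keys (pm_image f u) = f ` keys u"
proof
  show "keys (pm_image f u) \<subseteq> f ` keys u"
  proof
    fix w assume "w \<in> keys (pm_image f u)"
    then have "(\<Sum>v\<in>{v \<in> keys u. f v = w}. lookup u v) \<noteq> 0" by (simp add: lookup_pm_image in_keys_iff)
    then obtain v where "v \<in> {v \<in> keys u. f v = w}" by (meson sum.not_neutral_contains_not_neutral)
    then show "w \<in> f ` keys u" by blast
  qed
  show "f ` keys u \<subseteq> keys (pm_image f u)"
  proof
    fix w assume "w \<in> f ` keys u"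
    then obtain v where "v \<in> keys u" "f v = w" by blast
    then have "lookup u v \<le> lookup (pm_image f u) w"
      unfolding lookup_pm_image by (intro member_le_sum) auto
    moreover have "lookup u v \<noteq> 0" using \<open>v \<in> keys u\<close> by (simp add: in_keys_iff)
    ultimately show "w \<in> keys (pm_image f u)" by (simp add: in_keys_iff)
  qed
qed

lemma mweight_pm_image: "mweight \<nu> (pm_image f u) = mweight (\<nu> \<circ> f) u"
  by (simp add: pm_image_def mweight_sum mweight_def[of "\<nu> \<circ> f"])

lemma keys_add_nat: "keys ((a :: 'a \<Rightarrow>\<^sub>0 nat) + b) = keys a \<union> keys b"
  by (auto simp: in_keys_iff lookup_add)

lemma remove_single:
  assumes "e \<in> keys (Z :: 'a \<Rightarrow>\<^sub>0 nat)"
  shows "Z = single e 1 + (Z - single e 1)"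
proof (rule poly_mapping_eqI)
  fix x
  show "lookup Z x = lookup (single e 1 + (Z - single e 1)) x"
    using assms by (cases "x = e") (auto simp: lookup_add lookup_minus lookup_single in_keys_iff)
qed

lemma remove_two_singles:
  assumes "a \<in> keys (Z :: 'a \<Rightarrow>\<^sub>0 nat)" "b \<in> keys Z" "a \<noteq> b"
  shows "Z = single a 1 + single b 1 + (Z - single a 1 - single b 1)"
proof -
  have "b \<in> keys (Z - single a 1)" using assms by (simp add: in_keys_iff lookup_minus lookup_single)
  then show ?thesis using remove_single[OF assms(1)] remove_single by (metis add.assoc)
qed

definition tdeg :: "('a \<Rightarrow>\<^sub>0 nat) \<Rightarrow> nat" where
  "tdeg u = (\<Sum>v\<in>keys u. lookup u v)"

lemma tdeg_add: "tdeg (a + b) = tdeg a + tdeg b"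
  unfolding tdeg_def by (rule setsum_keys_plus_distrib) simp_all

lemma tdeg_single [simp]: "tdeg (single v n) = n"
  by (simp add: tdeg_def)

lemma tdeg_zero [simp]: "tdeg 0 = 0"
  by (simp add: tdeg_def)

lemma tdeg_eq_0_iff: "tdeg u = 0 \<longleftrightarrow> u = 0"
  by (auto simp: tdeg_def in_keys_iff poly_mapping_eq_iff fun_eq_iff)

lemma tdeg_sum: "tdeg (\<Sum>i\<in>A. g i) = (\<Sum>i\<in>A. tdeg (g i))"
  by (induction A rule: infinite_finite_induct) (auto simp: tdeg_add)

lemma tdeg_pm_image: "tdeg (pm_image f u) = tdeg u"
  by (simp add: pm_image_def tdeg_sum tdeg_def[of u])

lemma lookup_le_tdeg: "lookup m v \<le> tdeg m"
  by (cases "v \<in> keys m") (auto simp: tdeg_def in_keys_iff intro: member_le_sum)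

lemma pm_image_split:
  "pm_image f Z = a + b \<Longrightarrow> \<exists>Z1 Z2. Z = Z1 + Z2 \<and> pm_image f Z1 = a \<and> pm_image f Z2 = b"
proof (induction "tdeg a" arbitrary: a Z rule: less_induct)
  case less
  show ?case
  proof (cases "a = 0")
    case True
    then show ?thesis using less.prems by (intro exI[of _ 0] exI[of _ Z]) simp
  next
    case False
    then obtain x where x: "x \<in> keys a" by (metis keys_eq_empty ex_in_conv)
    then have "x \<in> keys (pm_image f Z)" using less.prems by (simp add: keys_add_nat)
    then obtain e where e: "e \<in> keys Z" "f e = x" by (auto simp: keys_pm_image)
    define a' where "a' = a - single x 1"
    define Z' where "Z' = Z - single e 1"
    have a: "a = single x 1 + a'" unfolding a'_def by (rule remove_single[OF x])
    have Z: "Z = single e 1 + Z'" unfolding Z'_def by (rule remove_single[OF e(1)])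
    have "single x 1 + pm_image f Z' = single x 1 + (a' + b)"
      using less.prems by (subst (asm) Z, subst (asm) a) (simp add: pm_image_add e(2) add.assoc)
    then have "pm_image f Z' = a' + b" by simp
    moreover have "tdeg a' < tdeg a" using a by (simp add: tdeg_add)
    ultimately obtain Z1 Z2 where "Z' = Z1 + Z2" "pm_image f Z1 = a'" "pm_image f Z2 = b"
      using less.hyps by blast
    then show ?thesis using Z a e(2)
      by (intro exI[of _ "single e 1 + Z1"] exI[of _ Z2]) (simp add: pm_image_add add.assoc)
  qed
qed

lemma mono_power: "(mono a :: ('v, 'k::comm_ring_1) mpoly) ^ n = mono (\<Sum>i<n. a)"
  by (induction n) (simp_all add: mono_def mono_mult add.commute mult_single)

lemma mono_prod: "(\<Prod>v\<in>A. (mono (g v) :: ('v, 'k::comm_ring_1) mpoly)) = mono (\<Sum>v\<in>A. g v)"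
  by (induction A rule: infinite_finite_induct) (simp_all add: mono_def mult_single)

lemma subst_monos:
  fixes \<sigma> :: "'v \<Rightarrow> ('w, 'k::comm_ring_1) mpoly"
  assumes "\<And>v. \<sigma> v = mono (\<tau> v)"
  shows "subst \<sigma> p = lin_ext (\<lambda>m. mono (\<Sum>v\<in>keys m. \<Sum>i<lookup m v. \<tau> v)) p"
  unfolding subst_def lin_ext_def assms mono_power mono_prod ..

lemma sum_lessThan_single: "(\<Sum>i<n. single a (Suc 0)) = single a n"
  by (induction n) (simp_all flip: single_add)

lemma subst_Var: "subst (\<lambda>v. Var (g v)) p = lin_ext (\<lambda>m. mono (pm_image g m)) p"
  by (simp add: subst_monos[where \<tau> = "\<lambda>v. single (g v) 1"] Var_eq_mono sum_lessThan_single
      pm_image_def)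

lemma subst_Var_in_polys_in:
  assumes "f \<in> polys_in V" "g ` V \<subseteq> U"
  shows "subst (\<lambda>v. Var (g v)) f \<in> polys_in U"
  unfolding subst_Var using assms
  by (intro lin_ext_in_ideal[OF is_ideal_polys_in] polys_in_mono) (force simp: keys_pm_image polys_in_def)

lemma subst_Var_mult_Var:
  "subst (\<lambda>v. Var (g1 v) * Var (g2 v)) p = lin_ext (\<lambda>m. mono (pm_image g1 m + pm_image g2 m)) p"
  by (simp add: subst_monos[where \<tau> = "\<lambda>v. single (g1 v) 1 + single (g2 v) 1"] Var_eq_mono
      mono_mult sum.distrib sum_lessThan_single pm_image_def)

section \<open>Standard monomials of a sum of ideals in disjoint variables\<close>

definition xpart :: "('a + 'b \<Rightarrow>\<^sub>0 nat) \<Rightarrow> ('a \<Rightarrow>\<^sub>0 nat)" where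
  "xpart m = Poly_Mapping.map_key Inl m"

definition ypart :: "('a + 'b \<Rightarrow>\<^sub>0 nat) \<Rightarrow> ('b \<Rightarrow>\<^sub>0 nat)" where
  "ypart m = Poly_Mapping.map_key Inr m"

lemma lookup_xpart: "lookup (xpart m) v = lookup m (Inl v)"
  unfolding xpart_def by (simp add: map_key.rep_eq)

lemma lookup_ypart: "lookup (ypart m) v = lookup m (Inr v)"
  unfolding ypart_def by (simp add: map_key.rep_eq)

lemma keys_xpart: "keys (xpart m) = Inl -` keys m"
  by (auto simp: in_keys_iff lookup_xpart)

lemma keys_ypart: "keys (ypart m) = Inr -` keys m"
  by (auto simp: in_keys_iff lookup_ypart)

lemma xpart_add: "xpart (a + b) = xpart a + xpart b"
  by (rule poly_mapping_eqI) (simp add: lookup_xpart lookup_add)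

lemma ypart_add: "ypart (a + b) = ypart a + ypart b"
  by (rule poly_mapping_eqI) (simp add: lookup_ypart lookup_add)

lemma lookup_pm_image_Inl_Inr [simp]: "lookup (pm_image Inl u) (Inr k) = 0"
  by (rule lookup_pm_image_notin) auto

lemma lookup_pm_image_Inr_Inl [simp]: "lookup (pm_image Inr u) (Inl k) = 0"
  by (rule lookup_pm_image_notin) auto

lemma xpart_pm_image_Inl [simp]: "xpart (pm_image Inl u) = u"
  by (rule poly_mapping_eqI) (simp add: lookup_xpart lookup_pm_image_inj)

lemma ypart_pm_image_Inr [simp]: "ypart (pm_image Inr u) = u"
  by (rule poly_mapping_eqI) (simp add: lookup_ypart lookup_pm_image_inj)

lemma xpart_pm_image_Inr [simp]: "xpart (pm_image Inr u) = 0"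
  by (rule poly_mapping_eqI) (simp add: lookup_xpart lookup_pm_image_notin)

lemma ypart_pm_image_Inl [simp]: "ypart (pm_image Inl u) = 0"
  by (rule poly_mapping_eqI) (simp add: lookup_ypart lookup_pm_image_notin)

lemma xpart_ypart_split: "m = pm_image Inl (xpart m) + pm_image Inr (ypart m)"
proof (rule poly_mapping_eqI)
  fix x show "lookup m x = lookup (pm_image Inl (xpart m) + pm_image Inr (ypart m)) x"
    by (cases x) (simp_all add: lookup_add lookup_pm_image_inj lookup_pm_image_notin
        lookup_xpart lookup_ypart)
qed

lemma mweight_case_sum: "mweight (case_sum \<omega>1 \<omega>2) m = mweight \<omega>1 (xpart m) + mweight \<omega>2 (ypart m)"
  by (subst (1) xpart_ypart_split) (simp add: mweight_add mweight_pm_image comp_def)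

locale weighted_ideal_pair = X: weighted_ideal V1 I \<omega>1 deg1 + Y: weighted_ideal V2 J \<omega>2 deg2
  for V1 :: "'a set" and I :: "('a, 'k::field) mpoly set" and \<omega>1 deg1
    and V2 :: "'b set" and J :: "('b, 'k) mpoly set" and \<omega>2 deg2
begin

abbreviation "Rxy \<equiv> (polys_in (Inl ` V1 \<union> Inr ` V2) :: ('a + 'b, 'k) mpoly set)"
abbreviation "sum_ideal \<equiv> ideal_gen Rxy (subst (\<lambda>v. Var (Inl v)) ` I \<union> subst (\<lambda>v. Var (Inr v)) ` J)"

definition annihilated :: "('a + 'b, 'k) mpoly set" where
  "annihilated = {p \<in> Rxy. \<forall>la lb. (\<forall>f\<in>I. lin_form la f = 0) \<longrightarrow> (\<forall>g\<in>J. lin_form lb g = 0)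
      \<longrightarrow> lin_form (\<lambda>m. la (xpart m) * lb (ypart m)) p = 0}"

lemma annihilated_ideal: "is_ideal Rxy annihilated"
proof (rule is_ideal_polys_inI)
  fix a b assume "a \<in> annihilated" "b \<in> annihilated"
  then show "a + b \<in> annihilated" by (simp add: annihilated_def lin_form_add polys_in_add)
next
  fix x :: "'a + 'b \<Rightarrow>\<^sub>0 nat" and c :: 'k and b
  assume x: "keys x \<subseteq> Inl ` V1 \<union> Inr ` V2" and b: "b \<in> annihilated"
  have "keys (xpart x) \<subseteq> V1" "keys (ypart x) \<subseteq> V2"
    using x by (auto simp: keys_xpart keys_ypart)
  then have "lin_form (\<lambda>m. la (xpart (x + m)) * lb (ypart (x + m))) b = 0"
    if "\<forall>f\<in>I. lin_form la f = 0" "\<forall>g\<in>J. lin_form lb g = 0" for la lb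
  proof -
    have "\<forall>f\<in>I. lin_form (\<lambda>u. la (xpart x + u)) f = 0" "\<forall>g\<in>J. lin_form (\<lambda>w. lb (ypart x + w)) g = 0"
      using X.annihilator_shift Y.annihilator_shift that \<open>keys (xpart x) \<subseteq> V1\<close>
        \<open>keys (ypart x) \<subseteq> V2\<close> by blast+
    moreover have "\<And>la lb. \<forall>f\<in>I. lin_form la f = 0 \<Longrightarrow> \<forall>g\<in>J. lin_form lb g = 0
        \<Longrightarrow> lin_form (\<lambda>m. la (xpart m) * lb (ypart m)) b = 0"
      using b by (simp add: annihilated_def)
    ultimately show ?thesis by (simp add: xpart_add ypart_add)
  qed
  then show "single x c * b \<in> annihilated"
    using x b by (simp add: annihilated_def lin_form_single_mult polys_in_mult polys_in_single)
qed (auto simp: annihilated_def)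

lemma sum_ideal_annihilated: "sum_ideal \<subseteq> annihilated"
proof (rule ideal_gen_least[OF annihilated_ideal], safe)
  fix f assume f: "f \<in> I"
  have eq: "subst (\<lambda>v. Var (Inl v)) f = (\<Sum>m\<in>keys f. single (pm_image Inl m) (lookup f m))"
    by (simp add: subst_Var lin_ext_def const_mult_mono)
  have "subst (\<lambda>v. Var (Inl v)) f \<in> Rxy"
    unfolding eq using f X.ideal_subset_polys
    by (intro polys_in_sum polys_in_single) (auto simp: keys_pm_image polys_in_def)
  moreover have "lin_form (\<lambda>m. la (xpart m) * lb (ypart m)) (subst (\<lambda>v. Var (Inl v)) f) = 0"
    if "\<forall>f\<in>I. lin_form la f = 0" for la lb
  proof -
    have "lin_form (\<lambda>m. la (xpart m) * lb (ypart m)) (subst (\<lambda>v. Var (Inl v)) f) = lin_form la f * lb 0"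
      unfolding eq by (simp add: lin_form_sum) (simp add: lin_form_def sum_distrib_right mult.assoc)
    then show ?thesis using that f by simp
  qed
  ultimately show "subst (\<lambda>v. Var (Inl v)) f \<in> annihilated"
    unfolding annihilated_def by blast
next
  fix g assume g: "g \<in> J"
  have eq: "subst (\<lambda>v. Var (Inr v)) g = (\<Sum>m\<in>keys g. single (pm_image Inr m) (lookup g m))"
    by (simp add: subst_Var lin_ext_def const_mult_mono)
  have "subst (\<lambda>v. Var (Inr v)) g \<in> Rxy"
    unfolding eq using g Y.ideal_subset_polys
    by (intro polys_in_sum polys_in_single) (force simp: keys_pm_image polys_in_def)
  moreover have "lin_form (\<lambda>m. la (xpart m) * lb (ypart m)) (subst (\<lambda>v. Var (Inr v)) g) = 0"
    if "\<forall>g\<in>J. lin_form lb g = 0" for la lb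
  proof -
    have "lin_form (\<lambda>m. la (xpart m) * lb (ypart m)) (subst (\<lambda>v. Var (Inr v)) g) = la 0 * lin_form lb g"
      unfolding eq by (simp add: lin_form_sum) (simp add: lin_form_def sum_distrib_left mult_ac)
    then show ?thesis using that g by simp
  qed
  ultimately show "subst (\<lambda>v. Var (Inr v)) g \<in> annihilated"
    unfolding annihilated_def by blast
qed

lemma normal_form_coeffs_nonzero:
  assumes "lookup (X.normal_form (xpart m)) u \<noteq> 0" "lookup (Y.normal_form (ypart m)) w \<noteq> 0"
    and "mweight (case_sum \<omega>1 \<omega>2) m \<le> mweight \<omega>1 u + mweight \<omega>2 w"
  shows "m = pm_image Inl u + pm_image Inr w"
proof -
  note k1 = X.keys_normal_form[of u "xpart m"] and k2 = Y.keys_normal_form[of w "ypart m"]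
  have "mweight \<omega>1 (xpart m) + mweight \<omega>2 (ypart m) \<le> mweight \<omega>1 u + mweight \<omega>2 w"
    using assms(3) by (simp add: mweight_case_sum)
  then have "u = xpart m" "w = ypart m" using k1 k2 assms(1,2) by (simp_all add: in_keys_iff)
  then show ?thesis using xpart_ypart_split[of m] by simp
qed

text \<open>The functional taking the coefficients of the standard monomials \<open>xpart P\<close> and
  \<open>ypart P\<close> in the two normal forms vanishes on the sum ideal, but by maximality of the
  weight of \<open>P\<close> it picks out exactly the (nonzero) coefficient of \<open>P\<close> in \<open>p\<close>.\<close>

lemma init_monomial_nonstandard:
  assumes p: "p \<in> sum_ideal" and P: "P \<in> keys (init (case_sum \<omega>1 \<omega>2) p)"
  shows "\<not> X.standard (xpart P) \<or> \<not> Y.standard (ypart P)"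
proof (rule ccontr)
  assume "\<not> ?thesis"
  then have su: "X.standard (xpart P)" and sv: "Y.standard (ypart P)" by auto
  let ?w = "mweight (case_sum \<omega>1 \<omega>2)"
  define l1 where "l1 m = lookup (X.normal_form m) (xpart P)" for m
  define l2 where "l2 m = lookup (Y.normal_form m) (ypart P)" for m
  have "p \<in> annihilated" using p sum_ideal_annihilated by blast
  then have L0: "lin_form (\<lambda>m. l1 (xpart m) * l2 (ypart m)) p = 0"
    unfolding annihilated_def l1_def l2_def
    using X.normal_form_coeff_annihilates Y.normal_form_coeff_annihilates by blast
  have Pk: "P \<in> keys p" and wP: "?w P = maxw (case_sum \<omega>1 \<omega>2) p"
    using P by (auto simp: keys_init)
  have other: "lookup p m * (l1 (xpart m) * l2 (ypart m)) = 0" if m: "m \<in> keys p" "m \<noteq> P" for m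
  proof (rule ccontr)
    assume nonzero: "lookup p m * (l1 (xpart m) * l2 (ypart m)) \<noteq> 0"
    have "?w m \<le> ?w P" using maxw_ge[OF m(1)] wP by simp
    then have "?w m \<le> mweight \<omega>1 (xpart P) + mweight \<omega>2 (ypart P)" by (simp add: mweight_case_sum)
    with nonzero have "m = pm_image Inl (xpart P) + pm_image Inr (ypart P)"
      by (intro normal_form_coeffs_nonzero) (auto simp: l1_def l2_def)
    with m(2) show False using xpart_ypart_split[of P] by simp
  qed
  have "lin_form (\<lambda>m. l1 (xpart m) * l2 (ypart m)) p = lookup p P * (l1 (xpart P) * l2 (ypart P))
      + (\<Sum>m\<in>keys p - {P}. lookup p m * (l1 (xpart m) * l2 (ypart m)))"
    unfolding lin_form_def by (rule sum.remove[OF finite_keys Pk])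
  also have "(\<Sum>m\<in>keys p - {P}. lookup p m * (l1 (xpart m) * l2 (ypart m))) = 0"
    by (rule sum.neutral) (use other in blast)
  also have "l1 (xpart P) * l2 (ypart P) = 1"
    using X.normal_form_standard[OF su] Y.normal_form_standard[OF sv] by (simp add: l1_def l2_def lookup_mono)
  finally have "lookup p P = 0" using L0 by simp
  with Pk show False by (simp add: in_keys_iff)
qed

end

definition px :: "nat \<times> nat \<times> nat \<Rightarrow> nat \<times> nat" where
  "px v = (fst v, fst (snd v))"

definition py :: "nat \<times> nat \<times> nat \<Rightarrow> nat \<times> nat" where
  "py v = (fst v, snd (snd v))"

lemma px_simp [simp]: "px (i, j, k) = (i, j)"
  by (simp add: px_def)

lemma py_simp [simp]: "py (i, j, k) = (i, k)"
  by (simp add: py_def)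

definition upper :: "(nat \<times> nat \<Rightarrow>\<^sub>0 nat) \<Rightarrow> (nat \<Rightarrow>\<^sub>0 nat)" where
  "upper u = pm_image fst u"

lemma upper_add: "upper (a + b) = upper a + upper b"
  by (simp add: upper_def pm_image_add)

lemma upper_single [simp]: "upper (single (i, j) n) = single i n"
  by (simp add: upper_def)

lemma upper_sum: "upper (\<Sum>i\<in>A. f i) = (\<Sum>i\<in>A. upper (f i))"
  by (simp add: upper_def pm_image_sum)

lemma upper_px: "upper (pm_image px Z) = upper (pm_image py Z)"
  by (simp add: upper_def pm_image_comp comp_def px_def py_def)

lemma keys_upper: "keys (upper u) = fst ` keys u"
  by (simp add: upper_def keys_pm_image)

lemma xvars_iff: "(i, j) \<in> xvars r s \<longleftrightarrow> 1 \<le> i \<and> i \<le> r \<and> 1 \<le> j \<and> j \<le> s i"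
  by (simp add: xvars_def)

lemma zvars_iff: "(i, j, k) \<in> zvars r s t \<longleftrightarrow> 1 \<le> i \<and> i \<le> r \<and> 1 \<le> j \<and> j \<le> s i \<and> 1 \<le> k \<and> k \<le> t i"
  by (simp add: zvars_def)

lemma keys_in_zvars_iff:
  "keys Z \<subseteq> zvars r s t \<longleftrightarrow> keys (pm_image px Z) \<subseteq> xvars r s \<and> keys (pm_image py Z) \<subseteq> xvars r t"
  by (force simp: keys_pm_image zvars_def xvars_def px_def py_def)

definition balanced :: "nat \<Rightarrow> (nat \<Rightarrow> nat) \<Rightarrow> (nat \<Rightarrow> nat) \<Rightarrow> (nat \<times> nat \<Rightarrow>\<^sub>0 nat)
    \<Rightarrow> (nat \<times> nat \<Rightarrow>\<^sub>0 nat) \<Rightarrow> bool" where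
  "balanced r s t u w \<longleftrightarrow> keys u \<subseteq> xvars r s \<and> keys w \<subseteq> xvars r t \<and> upper u = upper w"

lemma balanced_sym: "balanced r s t u w \<longleftrightarrow> balanced r t s w u"
  by (auto simp: balanced_def)

lemma balanced_projections: "keys Z \<subseteq> zvars r s t \<Longrightarrow> balanced r s t (pm_image px Z) (pm_image py Z)"
  by (simp add: balanced_def keys_in_zvars_iff upper_px)

lemma balanced_imp_lift:
  "balanced r s t u w \<Longrightarrow> \<exists>Z. keys Z \<subseteq> zvars r s t \<and> pm_image px Z = u \<and> pm_image py Z = w"
proof (induction "tdeg u" arbitrary: u w rule: less_induct)
  case less
  show ?case
  proof (cases "u = 0")
    case True
    then have "tdeg (upper w) = 0" using less.prems by (simp add: balanced_def upper_def)
    then have "w = 0" by (simp add: upper_def tdeg_pm_image tdeg_eq_0_iff)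
    then show ?thesis using True by (intro exI[of _ 0]) simp
  next
    case False
    then obtain i j where e: "(i, j) \<in> keys u" by (metis keys_eq_empty ex_in_conv surj_pair)
    then have "i \<in> keys (upper u)" by (force simp: keys_upper)
    then have "i \<in> keys (upper w)" using less.prems by (simp add: balanced_def)
    then obtain k where k: "(i, k) \<in> keys w" by (auto simp: keys_upper)
    define u' where "u' = u - single (i, j) 1"
    define w' where "w' = w - single (i, k) 1"
    have ue: "u = single (i, j) 1 + u'" unfolding u'_def by (rule remove_single[OF e])
    have we: "w = single (i, k) 1 + w'" unfolding w'_def by (rule remove_single[OF k])
    have "balanced r s t u' w'"
      using less.prems by (subst (asm) ue, subst (asm) we) (simp add: balanced_def keys_add_nat upper_add)
    moreover have "tdeg u' < tdeg u" by (subst ue) (simp add: tdeg_add)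
    ultimately obtain Z' where Z': "keys Z' \<subseteq> zvars r s t" "pm_image px Z' = u'" "pm_image py Z' = w'"
      using less.hyps by blast
    have "(i, j, k) \<in> zvars r s t"
      using less.prems e k by (auto simp: balanced_def xvars_iff zvars_iff)
    then show ?thesis using Z' ue we
      by (intro exI[of _ "single (i, j, k) 1 + Z'"]) (simp add: keys_add_nat pm_image_add)
  qed
qed

definition canon :: "nat \<Rightarrow> (nat \<Rightarrow> nat) \<Rightarrow> (nat \<Rightarrow> nat) \<Rightarrow> (nat \<times> nat \<Rightarrow>\<^sub>0 nat)
    \<Rightarrow> (nat \<times> nat \<Rightarrow>\<^sub>0 nat) \<Rightarrow> (nat \<times> nat \<times> nat \<Rightarrow>\<^sub>0 nat)" where
  "canon r s t u w = (SOME Z. keys Z \<subseteq> zvars r s t \<and> pm_image px Z = u \<and> pm_image py Z = w)"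

lemma canon:
  assumes "balanced r s t u w"
  shows "keys (canon r s t u w) \<subseteq> zvars r s t" "pm_image px (canon r s t u w) = u"
    "pm_image py (canon r s t u w) = w"
  using someI_ex[OF balanced_imp_lift[OF assms]] by (simp_all add: canon_def)

lemma balanced_split:
  assumes "balanced r s t (u1 + u2) w"
  obtains w1 w2 where "w = w1 + w2" "balanced r s t u1 w1" "balanced r s t u2 w2"
proof -
  note Z = canon[OF assms]
  obtain Z1 Z2 where Z12: "canon r s t (u1 + u2) w = Z1 + Z2" "pm_image px Z1 = u1" "pm_image px Z2 = u2"
    using pm_image_split[OF Z(2)] by blast
  have "keys Z1 \<subseteq> zvars r s t" "keys Z2 \<subseteq> zvars r s t" using Z(1) Z12(1) by (simp_all add: keys_add_nat)
  then have "balanced r s t u1 (pm_image py Z1)" "balanced r s t u2 (pm_image py Z2)"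
    using balanced_projections Z12(2,3) by blast+
  moreover have "w = pm_image py Z1 + pm_image py Z2" using Z(3) Z12(1) by (simp add: pm_image_add)
  ultimately show ?thesis using that by blast
qed

lemma balanced_add_iff:
  assumes "balanced r s t u1 w1"
  shows "balanced r s t (u1 + u) (w1 + w) \<longleftrightarrow> balanced r s t u w"
  using assms by (auto simp: balanced_def keys_add_nat upper_add)

definition xmon :: "nat list \<Rightarrow> nat list \<Rightarrow> (nat \<times> nat \<Rightarrow>\<^sub>0 nat)" where
  "xmon is j = (\<Sum>l<length is. single (is ! l, j ! l) 1)"

definition lift_mon :: "nat list \<Rightarrow> nat list \<Rightarrow> nat list \<Rightarrow> (nat \<times> nat \<times> nat \<Rightarrow>\<^sub>0 nat)" where
  "lift_mon is j k = (\<Sum>l<length is. single (is ! l, j ! l, k ! l) 1)"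

lemma px_lift_mon [simp]: "pm_image px (lift_mon is j k) = xmon is j"
  by (simp add: lift_mon_def xmon_def pm_image_sum)

lemma py_lift_mon [simp]: "pm_image py (lift_mon is j k) = xmon is k"
  by (simp add: lift_mon_def xmon_def pm_image_sum)

lemma upper_xmon: "upper (xmon is j) = (\<Sum>l<length is. single (is ! l) 1)"
  by (simp add: xmon_def upper_sum)

lemma keys_xmon: "keys (xmon is j) = (\<lambda>l. (is ! l, j ! l)) ` {..<length is}"
proof -
  have "xmon is j = pm_image (\<lambda>l. (is ! l, j ! l)) (\<Sum>l<length is. single l 1)"
    by (simp add: xmon_def pm_image_sum)
  moreover have "keys (\<Sum>l<length is. single l (1::nat)) = {..<length is}"
    by (auto simp: in_keys_iff lookup_sum lookup_single when_def split: if_splits)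
  ultimately show ?thesis by (simp add: keys_pm_image)
qed

lemma index_tuple_of_upper:
  "keys w \<subseteq> xvars r t \<Longrightarrow> upper w = (\<Sum>l<length is. single (is ! l) 1) \<Longrightarrow>
    \<exists>k\<in>index_tuples t is. xmon is k = w"
proof (induction "is" arbitrary: w)
  case Nil
  then have "w = 0" using tdeg_pm_image[of fst w] by (simp add: upper_def tdeg_eq_0_iff)
  then show ?case by (intro bexI[of _ "[]"]) (simp_all add: index_tuples_def xmon_def)
next
  case (Cons i "is")
  have cw: "upper w = single i 1 + (\<Sum>l<length is. single (is ! l) 1)"
    using Cons.prems(2) by (simp only: length_Cons sum.lessThan_Suc_shift nth_Cons_0 nth_Cons_Suc)
  then have "i \<in> keys (upper w)" by (simp add: keys_add_nat)
  then obtain k0 where k0: "(i, k0) \<in> keys w" by (auto simp: keys_upper)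
  define w' where "w' = w - single (i, k0) 1"
  have we: "w = single (i, k0) 1 + w'" unfolding w'_def by (rule remove_single[OF k0])
  have "upper w' = (\<Sum>l<length is. single (is ! l) 1)"
    using cw by (subst (asm) we) (simp add: upper_add)
  moreover have "keys w' \<subseteq> xvars r t" using Cons.prems(1) we by (simp add: keys_add_nat)
  ultimately obtain k' where k': "k' \<in> index_tuples t is" "xmon is k' = w'"
    using Cons.IH by blast
  have "1 \<le> k0" "k0 \<le> t i" using Cons.prems(1) k0 by (auto simp: xvars_iff)
  then have "k0 # k' \<in> index_tuples t (i # is)"
    using k'(1) by (auto simp: index_tuples_def less_Suc_eq_0_disj)
  moreover have "xmon (i # is) (k0 # k') = single (i, k0) 1 + xmon is k'"
    unfolding xmon_def by (simp only: length_Cons sum.lessThan_Suc_shift nth_Cons_0 nth_Cons_Suc)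
  then have "xmon (i # is) (k0 # k') = w" using k'(2) we by simp
  ultimately show ?case by blast
qed

lemma valid_rep_xmon: "valid_rep f is js \<Longrightarrow> m \<in> keys f \<Longrightarrow> xmon is (js m) = m"
  by (simp add: valid_rep_def xmon_def)

lemma valid_rep_upper_range:
  assumes "f \<in> polys_in (xvars r s)" "valid_rep f is js" "f \<noteq> 0" "l < length is"
  shows "1 \<le> is ! l \<and> is ! l \<le> r"
proof -
  obtain m where m: "m \<in> keys f" using assms(3) by (metis keys_eq_empty ex_in_conv)
  have "(is ! l, js m ! l) \<in> keys (xmon is (js m))" using assms(4) by (simp add: keys_xmon)
  then have "(is ! l, js m ! l) \<in> keys m" by (simp only: valid_rep_xmon[OF assms(2) m])
  then have "(is ! l, js m ! l) \<in> xvars r s" using assms(1) m by (auto simp: polys_in_def)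
  then show ?thesis by (simp add: xvars_iff)
qed

lemma keys_xmon_index_tuple:
  assumes "\<And>l. l < length is \<Longrightarrow> 1 \<le> is ! l \<and> is ! l \<le> r" "k \<in> index_tuples t is"
  shows "keys (xmon is k) \<subseteq> xvars r t"
  using assms by (auto simp: keys_xmon index_tuples_def xvars_iff)

lemma valid_rep_upper:
  assumes "valid_rep f is js" "m \<in> keys f"
  shows "upper m = (\<Sum>l<length is. single (is ! l) 1)"
proof -
  have "upper m = upper (xmon is (js m))" using valid_rep_xmon[OF assms] by simp
  then show ?thesis by (simp only: upper_xmon)
qed

section \<open>Ideals containing the quadrics\<close>

text \<open>Modulo the quadrics, a monomial in the \<open>z\<close>-variables only depends on its two projections;
  \<open>zmon u w\<close> is the class of the monomials with projections \<open>u\<close> and \<open>w\<close> (and \<open>0\<close> if there is none).\<close>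

locale quad_ideal =
  fixes r :: nat and s t :: "nat \<Rightarrow> nat" and K :: "(nat \<times> nat \<times> nat, 'k::field) mpoly set"
  assumes ideal: "is_ideal (polys_in (zvars r s t)) K" and quads: "QuadB r s t \<subseteq> K"
begin

lemma swap_in_ideal:
  assumes "(i, j, k) \<in> zvars r s t" "(i, j', k') \<in> zvars r s t" "j \<noteq> j'" "k \<noteq> k'"
  shows "mono (single (i, j, k') 1 + single (i, j', k) 1) - mono (single (i, j, k) 1 + single (i, j', k') 1) \<in> K"
proof -
  have quad: "mono (single (i, j1, k2) 1 + single (i, j2, k1) 1)
      - mono (single (i, j1, k1) 1 + single (i, j2, k2) 1) \<in> K"
    if "1 \<le> j1" "j1 < j2" "j2 \<le> s i" "1 \<le> k1" "k1 < k2" "k2 \<le> t i" for j1 j2 k1 k2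
  proof -
    have "Var (i, j1, k2) * Var (i, j2, k1) - Var (i, j1, k1) * Var (i, j2, k2) \<in> K"
      using that assms(1) quads unfolding QuadB_def zvars_iff by blast
    then show ?thesis by (simp add: Var_eq_mono mono_mult)
  qed
  have bounds: "1 \<le> j" "j \<le> s i" "1 \<le> j'" "j' \<le> s i" "1 \<le> k" "k \<le> t i" "1 \<le> k'" "k' \<le> t i"
    using assms(1,2) by (simp_all add: zvars_iff)
  consider "j < j'" "k < k'" | "j < j'" "k' < k" | "j' < j" "k < k'" | "j' < j" "k' < k"
    using assms(3,4) by linarith
  then show ?thesis
  proof cases
    case 1
    then show ?thesis using quad[of j j' k k'] bounds by simp
  next
    case 2
    then have "- (mono (single (i, j, k) 1 + single (i, j', k') 1)
        - mono (single (i, j, k') 1 + single (i, j', k) 1)) \<in> K"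
      using quad[of j j' k' k] bounds by (intro ideal_uminus[OF ideal]) simp
    then show ?thesis by simp
  next
    case 3
    then have "- (mono (single (i, j, k) 1 + single (i, j', k') 1)
        - mono (single (i, j, k') 1 + single (i, j', k) 1)) \<in> K"
      using quad[of j' j k k'] bounds by (intro ideal_uminus[OF ideal]) (simp add: add.commute)
    then show ?thesis by simp
  next
    case 4
    then show ?thesis using quad[of j' j k' k] bounds by (simp add: add.commute)
  qed
qed

lemma swap_mult_in_ideal:
  assumes "keys W \<subseteq> zvars r s t" "(i, j, k) \<in> zvars r s t" "(i, j', k') \<in> zvars r s t" "j \<noteq> j'" "k \<noteq> k'"
  shows "mono (single (i, j, k') 1 + single (i, j', k) 1 + W) - mono (single (i, j, k) 1 + single (i, j', k') 1 + W) \<in> K"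
proof -
  have "mono W * (mono (single (i, j, k') 1 + single (i, j', k) 1) - mono (single (i, j, k) 1 + single (i, j', k') 1)) \<in> K"
    using assms swap_in_ideal by (intro ideal_mult[OF ideal] polys_in_mono) auto
  then show ?thesis by (simp add: right_diff_distrib mono_mult add.commute)
qed

lemma exists_congruent_containing:
  assumes Z1: "keys Z1 \<subseteq> zvars r s t" and Z2: "keys Z2 \<subseteq> zvars r s t"
    and px: "pm_image px Z1 = pm_image px Z2" and py: "pm_image py Z1 = pm_image py Z2"
    and e: "e \<in> keys Z1"
  obtains Z3 where "keys Z3 \<subseteq> zvars r s t" "e \<in> keys Z3" "pm_image px Z3 = pm_image px Z2"
    "pm_image py Z3 = pm_image py Z2" "mono Z2 - mono Z3 \<in> K"
proof (cases "e \<in> keys Z2")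
  case True
  then show ?thesis using that Z2 ideal_zero[OF ideal] by simp
next
  case False
  obtain i j k where eijk: "e = (i, j, k)" by (cases e) auto
  have "(i, j) \<in> keys (pm_image px Z2)"
    unfolding px[symmetric] keys_pm_image by (rule image_eqI[of _ _ e]) (use e eijk in simp_all)
  then obtain k' where e2: "(i, j, k') \<in> keys Z2" by (auto simp: keys_pm_image px_def)
  have "(i, k) \<in> keys (pm_image py Z2)"
    unfolding py[symmetric] keys_pm_image by (rule image_eqI[of _ _ e]) (use e eijk in simp_all)
  then obtain j' where e3: "(i, j', k) \<in> keys Z2" by (auto simp: keys_pm_image py_def)
  have "k' \<noteq> k" "j' \<noteq> j" using False e2 e3 eijk by auto
  have ez: "(i, j, k) \<in> zvars r s t" using e eijk Z1 by blast
  have e4z: "(i, j', k') \<in> zvars r s t" using e2 e3 Z2 by (auto simp: zvars_iff)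
  define W where "W = Z2 - single (i, j, k') 1 - single (i, j', k) 1"
  have Z2W: "Z2 = single (i, j, k') 1 + single (i, j', k) 1 + W"
    unfolding W_def using \<open>k' \<noteq> k\<close> by (intro remove_two_singles[OF e2 e3]) simp
  define Z3 where "Z3 = single (i, j, k) 1 + single (i, j', k') 1 + W"
  have kW: "keys W \<subseteq> zvars r s t" using Z2 Z2W by (simp add: keys_add_nat)
  have "mono Z2 - mono Z3 \<in> K"
    unfolding Z3_def using kW ez e4z \<open>k' \<noteq> k\<close> \<open>j' \<noteq> j\<close> by (subst Z2W) (rule swap_mult_in_ideal; simp)
  moreover have "keys Z3 \<subseteq> zvars r s t" using kW ez e4z by (simp add: Z3_def keys_add_nat)
  moreover have "pm_image px Z3 = pm_image px Z2" "pm_image py Z3 = pm_image py Z2"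
    unfolding Z3_def Z2W by (simp_all add: pm_image_add add_ac)
  moreover have "e \<in> keys Z3" by (simp add: Z3_def keys_add_nat eijk)
  ultimately show ?thesis using that by blast
qed

lemma quad_congruent:
  "keys Z1 \<subseteq> zvars r s t \<Longrightarrow> keys Z2 \<subseteq> zvars r s t \<Longrightarrow> pm_image px Z1 = pm_image px Z2
    \<Longrightarrow> pm_image py Z1 = pm_image py Z2 \<Longrightarrow> mono Z1 - mono Z2 \<in> K"
proof (induction "tdeg Z1" arbitrary: Z1 Z2 rule: less_induct)
  case less
  show ?case
  proof (cases "Z1 = 0")
    case True
    then have "tdeg (pm_image px Z2) = 0" using less.prems(3) by simp
    then have "Z2 = 0" by (simp add: tdeg_pm_image tdeg_eq_0_iff)
    then show ?thesis using True ideal_zero[OF ideal] by simp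
  next
    case False
    then obtain e where e: "e \<in> keys Z1" by (metis keys_eq_empty ex_in_conv)
    obtain Z3 where Z3: "keys Z3 \<subseteq> zvars r s t" "e \<in> keys Z3" "pm_image px Z3 = pm_image px Z2"
      "pm_image py Z3 = pm_image py Z2" "mono Z2 - mono Z3 \<in> K"
      using exists_congruent_containing[OF less.prems e] .
    define Z1' where "Z1' = Z1 - single e 1"
    define W where "W = Z3 - single e 1"
    have Z1e: "Z1 = single e 1 + Z1'" unfolding Z1'_def by (rule remove_single[OF e])
    have Z3e: "Z3 = single e 1 + W" unfolding W_def by (rule remove_single[OF Z3(2)])
    have "single (px e) 1 + pm_image px Z1' = single (px e) 1 + pm_image px W"
      using less.prems(3) Z3(3) Z1e Z3e by (metis pm_image_add pm_image_single)
    moreover have "single (py e) 1 + pm_image py Z1' = single (py e) 1 + pm_image py W"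
      using less.prems(4) Z3(4) Z1e Z3e by (metis pm_image_add pm_image_single)
    ultimately have "pm_image px Z1' = pm_image px W" "pm_image py Z1' = pm_image py W" by simp_all
    moreover have "tdeg Z1' < tdeg Z1" by (subst Z1e) (simp add: tdeg_add)
    moreover have "keys Z1' \<subseteq> zvars r s t" "keys W \<subseteq> zvars r s t"
      using less.prems(1) Z3(1) Z1e Z3e by (simp_all add: keys_add_nat)
    ultimately have "mono Z1' - mono W \<in> K" using less.hyps by blast
    moreover have "mono (single e 1) \<in> polys_in (zvars r s t)"
      using less.prems(1) e by (intro polys_in_mono) auto
    ultimately have "mono (single e 1) * (mono Z1' - mono W) \<in> K"
      by (intro ideal_mult[OF ideal])
    then have "mono Z1 - mono Z3 \<in> K" by (simp add: Z1e Z3e right_diff_distrib mono_mult)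
    from ideal_minus[OF ideal this Z3(5)] show ?thesis by simp
  qed
qed

definition zmon :: "(nat \<times> nat \<Rightarrow>\<^sub>0 nat) \<Rightarrow> (nat \<times> nat \<Rightarrow>\<^sub>0 nat) \<Rightarrow> (nat \<times> nat \<times> nat, 'k) mpoly" where
  "zmon u w = (if balanced r s t u w then mono (canon r s t u w) else 0)"

lemma zmon_congruent:
  assumes "keys Z \<subseteq> zvars r s t"
  shows "zmon (pm_image px Z) (pm_image py Z) - mono Z \<in> K"
  using quad_congruent[OF canon(1) assms] canon(2,3) balanced_projections[OF assms]
  by (simp add: zmon_def)

lemma zmon_add:
  assumes "balanced r s t u1 w1" "balanced r s t u2 w2"
  shows "zmon (u1 + u2) (w1 + w2) - zmon u1 w1 * zmon u2 w2 \<in> K"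
proof -
  let ?Z = "canon r s t u1 w1 + canon r s t u2 w2"
  have "keys ?Z \<subseteq> zvars r s t" using canon(1)[OF assms(1)] canon(1)[OF assms(2)] by (simp add: keys_add_nat)
  moreover have "pm_image px ?Z = u1 + u2" "pm_image py ?Z = w1 + w2"
    using canon[OF assms(1)] canon[OF assms(2)] by (simp_all add: pm_image_add)
  ultimately show ?thesis using zmon_congruent[of ?Z] assms by (simp add: zmon_def mono_mult)
qed

end

section \<open>Transfer of ideals to the fiber product\<close>

text \<open>With \<open>\<psi> u w = zmon u w\<close>, the set \<open>transfer K V W \<psi>\<close> is the ideal of those
  \<open>x\<close>-polynomials whose lifts along all \<open>y\<close>-monomials lie in \<open>K\<close>; it is the vehicle that
  carries \<open>in(I)\<close> over to the fiber product.\<close>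

definition transfer :: "('z, 'k::comm_ring_1) mpoly set \<Rightarrow> 'v set \<Rightarrow> 'w set
    \<Rightarrow> (('v \<Rightarrow>\<^sub>0 nat) \<Rightarrow> ('w \<Rightarrow>\<^sub>0 nat) \<Rightarrow> ('z, 'k) mpoly) \<Rightarrow> ('v, 'k) mpoly set" where
  "transfer K V W \<psi> = {q \<in> polys_in V. \<forall>w. keys w \<subseteq> W \<longrightarrow> lin_ext (\<lambda>m. \<psi> m w) q \<in> K}"

text \<open>The hypothesis \<open>shift\<close> is the multiplicativity of \<open>\<psi>\<close> modulo \<open>K\<close>; for \<open>zmon\<close> it is
  \<open>zmon_add\<close>.\<close>

lemma transfer_ideal:
  fixes K :: "('z, 'k::comm_ring_1) mpoly set" and V :: "'v set" and W :: "'w set"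
  assumes K: "is_ideal (polys_in Z) K"
    and shift: "\<And>x w. keys x \<subseteq> V \<Longrightarrow> keys w \<subseteq> W \<Longrightarrow>
      \<exists>c w'. c \<in> polys_in Z \<and> keys w' \<subseteq> W \<and> (\<forall>m. \<psi> (x + m) w - c * \<psi> m w' \<in> K)"
  shows "is_ideal (polys_in V) (transfer K V W \<psi>)"
proof (rule is_ideal_polys_inI)
  fix a b assume "a \<in> transfer K V W \<psi>" "b \<in> transfer K V W \<psi>"
  then show "a + b \<in> transfer K V W \<psi>"
    by (simp add: transfer_def lin_ext_add polys_in_add ideal_add[OF K])
next
  fix x :: "'v \<Rightarrow>\<^sub>0 nat" and c :: 'k and b
  assume x: "keys x \<subseteq> V" and b: "b \<in> transfer K V W \<psi>"
  have "lin_ext (\<lambda>m. \<psi> m w) (single x c * b) \<in> K" if w: "keys w \<subseteq> W" for w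
  proof -
    obtain c' w' where c': "c' \<in> polys_in Z" "keys w' \<subseteq> W" "\<And>m. \<psi> (x + m) w - c' * \<psi> m w' \<in> K"
      using shift[OF x w] by blast
    have "lin_ext (\<lambda>m. \<psi> (x + m) w) b \<in> K"
    proof (rule lin_ext_congruent_in_ideal[OF K _ c'(3)])
      show "lin_ext (\<lambda>m. c' * \<psi> m w') b \<in> K"
        using b c'(1,2) by (simp add: lin_ext_fun_mult transfer_def ideal_mult[OF K])
    qed
    then show ?thesis by (simp add: lin_ext_single_mult ideal_const_mult[OF K])
  qed
  then show "single x c * b \<in> transfer K V W \<psi>"
    using x b by (simp add: transfer_def polys_in_mult polys_in_single)
qed (auto simp: transfer_def ideal_zero[OF K])

lemma mono_in_transfer: "mono u \<in> transfer K V W \<psi> \<Longrightarrow> keys w \<subseteq> W \<Longrightarrow> \<psi> u w \<in> K"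
  by (simp add: transfer_def mono_def)

context quad_ideal
begin

abbreviation "Tx \<equiv> transfer K (xvars r s) (xvars r t) zmon"
abbreviation "Ty \<equiv> transfer K (xvars r t) (xvars r s) (\<lambda>m u. zmon u m)"

lemma Tx_ideal: "is_ideal (polys_in (xvars r s)) Tx"
proof (rule transfer_ideal[OF ideal])
  fix x w :: "nat \<times> nat \<Rightarrow>\<^sub>0 nat" assume w: "keys w \<subseteq> xvars r t"
  show "\<exists>c w'. c \<in> polys_in (zvars r s t) \<and> keys w' \<subseteq> xvars r t \<and> (\<forall>m. zmon (x + m) w - c * zmon m w' \<in> K)"
  proof (cases "\<exists>m0. balanced r s t (x + m0) w")
    case False
    then show ?thesis using w ideal_zero[OF ideal] by (intro exI[of _ 0] exI[of _ w]) (simp add: zmon_def)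
  next
    case True
    then obtain m0 where "balanced r s t (x + m0) w" ..
    then obtain w1 w2 where w12: "w = w1 + w2" "balanced r s t x w1" "balanced r s t m0 w2"
      by (rule balanced_split)
    have "zmon (x + m) w - zmon x w1 * zmon m w2 \<in> K" for m
    proof (cases "balanced r s t m w2")
      case True
      then show ?thesis using zmon_add[OF w12(2) True] w12(1) by simp
    next
      case False
      then show ?thesis using balanced_add_iff[OF w12(2)] w12(1) ideal_zero[OF ideal] by (simp add: zmon_def)
    qed
    moreover have "zmon x w1 \<in> polys_in (zvars r s t)"
      using canon(1)[OF w12(2)] w12(2) by (simp add: zmon_def polys_in_mono)
    moreover have "keys w2 \<subseteq> xvars r t" using w12(3) by (simp add: balanced_def)
    ultimately show ?thesis by blast
  qed
qed

lemma Ty_ideal: "is_ideal (polys_in (xvars r t)) Ty"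
proof (rule transfer_ideal[OF ideal])
  fix x u :: "nat \<times> nat \<Rightarrow>\<^sub>0 nat" assume u: "keys u \<subseteq> xvars r s"
  show "\<exists>c u'. c \<in> polys_in (zvars r s t) \<and> keys u' \<subseteq> xvars r s \<and> (\<forall>m. zmon u (x + m) - c * zmon u' m \<in> K)"
  proof (cases "\<exists>m0. balanced r s t u (x + m0)")
    case False
    then show ?thesis using u ideal_zero[OF ideal] by (intro exI[of _ 0] exI[of _ u]) (simp add: zmon_def)
  next
    case True
    then obtain m0 where "balanced r t s (x + m0) u" by (auto simp: balanced_sym)
    then obtain u1 u2 where u12: "u = u1 + u2" "balanced r s t u1 x" "balanced r s t u2 m0"
      by (rule balanced_split) (simp add: balanced_sym)
    have "zmon u (x + m) - zmon u1 x * zmon u2 m \<in> K" for m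
    proof (cases "balanced r s t u2 m")
      case True
      then show ?thesis using zmon_add[OF u12(2) True] u12(1) by simp
    next
      case False
      then show ?thesis using balanced_add_iff[OF u12(2)] u12(1) ideal_zero[OF ideal] by (simp add: zmon_def)
    qed
    moreover have "zmon u1 x \<in> polys_in (zvars r s t)"
      using canon(1)[OF u12(2)] u12(2) by (simp add: zmon_def polys_in_mono)
    moreover have "keys u2 \<subseteq> xvars r s" using u12(3) by (simp add: balanced_def)
    ultimately show ?thesis by blast
  qed
qed

end

lemma mweight_pullback:
  "mweight (pullback_weight \<omega>1 \<omega>2) Z = mweight \<omega>1 (pm_image px Z) + mweight \<omega>2 (pm_image py Z)"
proof -
  have "pullback_weight \<omega>1 \<omega>2 v = (\<omega>1 \<circ> px) v + (\<omega>2 \<circ> py) v" for v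
    by (cases v) (simp add: pullback_weight_def)
  then have "mweight (pullback_weight \<omega>1 \<omega>2) Z = mweight (\<omega>1 \<circ> px) Z + mweight (\<omega>2 \<circ> py) Z"
    unfolding mweight_def by (simp add: distrib_left sum.distrib)
  then show ?thesis by (simp add: mweight_pm_image)
qed

definition phiB_mon :: "(nat \<times> nat \<times> nat \<Rightarrow>\<^sub>0 nat) \<Rightarrow> ((nat \<times> nat) + (nat \<times> nat) \<Rightarrow>\<^sub>0 nat)" where
  "phiB_mon Z = pm_image Inl (pm_image px Z) + pm_image Inr (pm_image py Z)"

lemma xpart_phiB_mon [simp]: "xpart (phiB_mon Z) = pm_image px Z"
  by (simp add: phiB_mon_def xpart_add)

lemma ypart_phiB_mon [simp]: "ypart (phiB_mon Z) = pm_image py Z"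
  by (simp add: phiB_mon_def ypart_add)

lemma mweight_phiB_mon: "mweight (case_sum \<omega>1 \<omega>2) (phiB_mon Z) = mweight (pullback_weight \<omega>1 \<omega>2) Z"
  by (simp add: mweight_case_sum mweight_pullback)

lemma phiB_eq: "phiB q = lin_ext (\<lambda>Z. mono (phiB_mon Z)) q"
proof -
  have e: "(\<lambda>(i, j, k). Var (Inl (i, j)) * Var (Inr (i, k))) = (\<lambda>v. Var ((Inl \<circ> px) v) * Var ((Inr \<circ> py) v))"
    by (auto simp: fun_eq_iff px_def py_def)
  show ?thesis
    unfolding phiB_def e subst_Var_mult_Var by (simp add: phiB_mon_def pm_image_comp comp_def)
qed

lemma phiB_lift_x:
  assumes "\<And>m. m \<in> keys f \<Longrightarrow> pm_image px (h m) = m \<and> pm_image py (h m) = w"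
  shows "phiB (lin_ext (\<lambda>m. mono (h m)) f) = subst (\<lambda>v. Var (Inl v)) f * mono (pm_image Inr w)"
proof -
  have "phiB (lin_ext (\<lambda>m. mono (h m)) f) = lin_ext (\<lambda>m. mono (pm_image Inl m) * mono (pm_image Inr w)) f"
    using assms by (simp add: phiB_eq lin_ext_lin_ext_mono phiB_mon_def mono_mult cong: lin_ext_cong)
  then show ?thesis by (simp add: subst_Var lin_ext_fun_mult mult.commute[of _ "mono (pm_image Inr w)"])
qed

lemma phiB_lift_y:
  assumes "\<And>m. m \<in> keys g \<Longrightarrow> pm_image px (h m) = u \<and> pm_image py (h m) = m"
  shows "phiB (lin_ext (\<lambda>m. mono (h m)) g) = mono (pm_image Inl u) * subst (\<lambda>v. Var (Inr v)) g"
proof -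
  have "phiB (lin_ext (\<lambda>m. mono (h m)) g) = lin_ext (\<lambda>m. mono (pm_image Inl u) * mono (pm_image Inr m)) g"
    using assms by (simp add: phiB_eq lin_ext_lin_ext_mono phiB_mon_def mono_mult cong: lin_ext_cong)
  then show ?thesis by (simp add: subst_Var lin_ext_fun_mult)
qed

lemma lift_x_eq: "lift_x f is js k = lin_ext (\<lambda>m. mono (lift_mon is (js m) k)) f"
  by (simp add: lift_x_def lift_mon_def lin_ext_def const_mult_mono)

lemma lift_y_eq: "lift_y g is ks j = lin_ext (\<lambda>m. mono (lift_mon is j (ks m))) g"
  by (simp add: lift_y_def lift_mon_def lin_ext_def const_mult_mono)

lemma QuadB_mono_diff:
  assumes "q \<in> QuadB r s t"
  obtains A B where "q = mono A - mono B" "pm_image px A = pm_image px B" "pm_image py A = pm_image py B"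
    "keys A \<subseteq> zvars r s t" "keys B \<subseteq> zvars r s t"
proof -
  obtain i j1 j2 k1 k2 where q: "q = mono (single (i, j1, k2) 1 + single (i, j2, k1) 1)
      - mono (single (i, j1, k1) 1 + single (i, j2, k2) 1)"
    and bounds: "1 \<le> i" "i \<le> r" "1 \<le> j1" "j1 < j2" "j2 \<le> s i" "1 \<le> k1" "k1 < k2" "k2 \<le> t i"
    using assms unfolding QuadB_def by (auto simp: Var_eq_mono mono_mult)
  show ?thesis
  proof (rule that[OF q])
    show "pm_image px (single (i, j1, k2) 1 + single (i, j2, k1) 1)
        = pm_image px (single (i, j1, k1) 1 + single (i, j2, k2) 1)"
      "pm_image py (single (i, j1, k2) 1 + single (i, j2, k1) 1)
        = pm_image py (single (i, j1, k1) 1 + single (i, j2, k2) 1)"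
      by (simp_all add: pm_image_add add.commute)
  qed (use bounds in \<open>auto simp: keys_add_nat zvars_iff\<close>)
qed

lemma QuadB_init: "q \<in> QuadB r s t \<Longrightarrow> init (pullback_weight \<omega>1 \<omega>2) q = q"
proof (elim QuadB_mono_diff)
  fix A B assume q: "q = mono A - mono B" and "pm_image px A = pm_image px B" "pm_image py A = pm_image py B"
  moreover have "keys q \<subseteq> {A, B}" unfolding q using keys_diff[of "mono A" "mono B"] by auto
  ultimately show ?thesis
    by (intro init_const_weight[of _ _ "mweight (pullback_weight \<omega>1 \<omega>2) A"]) (auto simp: mweight_pullback)
qed

context
  fixes r :: nat and s t :: "nat \<Rightarrow> nat" and I J :: "(nat \<times> nat, 'k::field) mpoly set"
  assumes I: "I \<subseteq> polys_in (xvars r s)" and J: "J \<subseteq> polys_in (xvars r t)"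
begin

abbreviation "Rxy \<equiv> (polys_in (Inl ` xvars r s \<union> Inr ` xvars r t) :: ((nat \<times> nat) + (nat \<times> nat), 'k) mpoly set)"
abbreviation "sum_ideal \<equiv> ideal_gen Rxy (subst (\<lambda>v. Var (Inl v)) ` I \<union> subst (\<lambda>v. Var (Inr v)) ` J)"

lemma sum_ideal_is_ideal: "is_ideal Rxy sum_ideal"
  using I J by (intro ideal_gen_is_ideal) (auto intro!: subst_Var_in_polys_in)

lemma lift_x_in_TFP:
  assumes f: "f \<in> I" and rep: "valid_rep f is js" and k: "k \<in> index_tuples t is"
  shows "lift_x f is js k \<in> toric_fiber_product r s t I J"
proof (cases "f = 0")
  case True
  then show ?thesis by (simp add: lift_x_def toric_fiber_product_def phiB_eq ideal_zero[OF sum_ideal_is_ideal])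
next
  case False
  have fR: "f \<in> polys_in (xvars r s)" using f I by blast
  have kw: "keys (xmon is k) \<subseteq> xvars r t"
    using valid_rep_upper_range[OF fR rep False] k by (rule keys_xmon_index_tuple)
  have proj: "pm_image px (lift_mon is (js m) k) = m \<and> pm_image py (lift_mon is (js m) k) = xmon is k"
    if "m \<in> keys f" for m
    using valid_rep_xmon[OF rep that] by simp
  have "lift_x f is js k \<in> polys_in (zvars r s t)"
    unfolding lift_x_eq using fR proj kw
    by (intro lin_ext_in_ideal[OF is_ideal_polys_in] polys_in_mono) (simp add: keys_in_zvars_iff polys_in_def)
  moreover have "subst (\<lambda>v. Var (Inl v)) f \<in> sum_ideal"
    using f by (intro subsetD[OF ideal_gen_base]) blast
  then have "subst (\<lambda>v. Var (Inl v)) f * mono (pm_image Inr (xmon is k)) \<in> sum_ideal"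
    using kw by (intro ideal_mult_right[OF sum_ideal_is_ideal] polys_in_mono) (auto simp: keys_pm_image)
  ultimately show ?thesis by (simp add: toric_fiber_product_def lift_x_eq phiB_lift_x[OF proj])
qed

lemma lift_y_in_TFP:
  assumes g: "g \<in> J" and rep: "valid_rep g is ks" and j: "j \<in> index_tuples s is"
  shows "lift_y g is ks j \<in> toric_fiber_product r s t I J"
proof (cases "g = 0")
  case True
  then show ?thesis by (simp add: lift_y_def toric_fiber_product_def phiB_eq ideal_zero[OF sum_ideal_is_ideal])
next
  case False
  have gR: "g \<in> polys_in (xvars r t)" using g J by blast
  have ku: "keys (xmon is j) \<subseteq> xvars r s"
    using valid_rep_upper_range[OF gR rep False] j by (rule keys_xmon_index_tuple)
  have proj: "pm_image px (lift_mon is j (ks m)) = xmon is j \<and> pm_image py (lift_mon is j (ks m)) = m"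
    if "m \<in> keys g" for m
    using valid_rep_xmon[OF rep that] by simp
  have "lift_y g is ks j \<in> polys_in (zvars r s t)"
    unfolding lift_y_eq using gR proj ku
    by (intro lin_ext_in_ideal[OF is_ideal_polys_in] polys_in_mono) (simp add: keys_in_zvars_iff polys_in_def)
  moreover have "subst (\<lambda>v. Var (Inr v)) g \<in> sum_ideal"
    using g by (intro subsetD[OF ideal_gen_base]) blast
  then have "mono (pm_image Inl (xmon is j)) * subst (\<lambda>v. Var (Inr v)) g \<in> sum_ideal"
    using ku by (intro ideal_mult[OF sum_ideal_is_ideal] polys_in_mono) (auto simp: keys_pm_image)
  ultimately show ?thesis by (simp add: toric_fiber_product_def lift_y_eq phiB_lift_y[OF proj])
qed

lemma QuadB_in_TFP:
  assumes "q \<in> QuadB r s t"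
  shows "q \<in> toric_fiber_product r s t I J"
proof -
  obtain A B where q: "q = mono A - mono B" "pm_image px A = pm_image px B" "pm_image py A = pm_image py B"
    "keys A \<subseteq> zvars r s t" "keys B \<subseteq> zvars r s t"
    using QuadB_mono_diff[OF assms] by blast
  then have "q \<in> polys_in (zvars r s t)" by (simp add: polys_in_minus polys_in_mono)
  moreover have "phiB q = 0" using q by (simp add: phiB_eq lin_ext_diff mono_def phiB_mon_def)
  ultimately show ?thesis by (simp add: toric_fiber_product_def ideal_zero[OF sum_ideal_is_ideal])
qed

end

section \<open>Initial forms in the toric fiber product\<close>

context quad_ideal
begin

lemma init_in_Tx:
  assumes f: "f \<in> polys_in (xvars r s)" and rep: "valid_rep f is js"
    and lifts: "\<And>k. k \<in> index_tuples t is \<Longrightarrow> init (pullback_weight \<omega>1 \<omega>2) (lift_x f is js k) \<in> K"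
  shows "init \<omega>1 f \<in> Tx"
proof -
  have keys_init_f: "keys (init \<omega>1 f) \<subseteq> keys f" by (auto simp: keys_init)
  have "lin_ext (\<lambda>m. zmon m w) (init \<omega>1 f) \<in> K" if w: "keys w \<subseteq> xvars r t" for w
  proof (cases "upper w = (\<Sum>l<length is. single (is ! l) 1)")
    case False
    then have "zmon m w = 0" if "m \<in> keys (init \<omega>1 f)" for m
      using that keys_init_f valid_rep_upper[OF rep] by (auto simp: zmon_def balanced_def)
    then show ?thesis using ideal_zero[OF ideal] by (simp cong: lin_ext_cong)
  next
    case True
    then obtain k where k: "k \<in> index_tuples t is" "xmon is k = w"
      using index_tuple_of_upper[OF w] by blast
    let ?h = "\<lambda>m. lift_mon is (js m) k"
    have proj: "pm_image px (?h m) = m" "pm_image py (?h m) = w" if "m \<in> keys f" for m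
      using valid_rep_xmon[OF rep that] k(2) by simp_all
    have "lin_ext (\<lambda>m. mono (?h m)) (init \<omega>1 f) \<in> K"
    proof (cases "lin_ext (\<lambda>m. mono (?h m)) (init \<omega>1 f) = 0")
      case False
      have "init (pullback_weight \<omega>1 \<omega>2) (lift_x f is js k) = lin_ext (\<lambda>m. mono (?h m)) (init \<omega>1 f)"
        unfolding lift_x_eq using valid_rep_xmon[OF rep] k(2)
        by (intro init_lin_ext_mono[OF _ False, where c = "mweight \<omega>2 w"]) (simp add: mweight_pullback)
      then show ?thesis using lifts[OF k(1)] by simp
    qed (simp add: ideal_zero[OF ideal])
    moreover have "zmon m w - mono (?h m) \<in> K" if "m \<in> keys (init \<omega>1 f)" for m
      using zmon_congruent[of "?h m"] proj[of m] that keys_init_f f w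
      by (auto simp: keys_in_zvars_iff polys_in_def)
    ultimately show ?thesis by (rule lin_ext_congruent_in_ideal[OF ideal])
  qed
  then show ?thesis using init_in_polys_in[OF f] by (simp add: transfer_def)
qed

lemma init_in_Ty:
  assumes g: "g \<in> polys_in (xvars r t)" and rep: "valid_rep g is ks"
    and lifts: "\<And>j. j \<in> index_tuples s is \<Longrightarrow> init (pullback_weight \<omega>1 \<omega>2) (lift_y g is ks j) \<in> K"
  shows "init \<omega>2 g \<in> Ty"
proof -
  have keys_init_g: "keys (init \<omega>2 g) \<subseteq> keys g" by (auto simp: keys_init)
  have "lin_ext (\<lambda>m. zmon u m) (init \<omega>2 g) \<in> K" if u: "keys u \<subseteq> xvars r s" for u
  proof (cases "upper u = (\<Sum>l<length is. single (is ! l) 1)")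
    case False
    then have "zmon u m = 0" if "m \<in> keys (init \<omega>2 g)" for m
      using that keys_init_g valid_rep_upper[OF rep] by (auto simp: zmon_def balanced_def)
    then show ?thesis using ideal_zero[OF ideal] by (simp cong: lin_ext_cong)
  next
    case True
    then obtain j where j: "j \<in> index_tuples s is" "xmon is j = u"
      using index_tuple_of_upper[OF u] by blast
    let ?h = "\<lambda>m. lift_mon is j (ks m)"
    have proj: "pm_image px (?h m) = u" "pm_image py (?h m) = m" if "m \<in> keys g" for m
      using valid_rep_xmon[OF rep that] j(2) by simp_all
    have "lin_ext (\<lambda>m. mono (?h m)) (init \<omega>2 g) \<in> K"
    proof (cases "lin_ext (\<lambda>m. mono (?h m)) (init \<omega>2 g) = 0")
      case False
      have "init (pullback_weight \<omega>1 \<omega>2) (lift_y g is ks j) = lin_ext (\<lambda>m. mono (?h m)) (init \<omega>2 g)"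
        unfolding lift_y_eq using valid_rep_xmon[OF rep] j(2)
        by (intro init_lin_ext_mono[OF _ False, where c = "mweight \<omega>1 u"]) (simp add: mweight_pullback add.commute)
      then show ?thesis using lifts[OF j(1)] by simp
    qed (simp add: ideal_zero[OF ideal])
    moreover have "zmon u m - mono (?h m) \<in> K" if "m \<in> keys (init \<omega>2 g)" for m
      using zmon_congruent[of "?h m"] proj[of m] that keys_init_g g u
      by (auto simp: keys_in_zvars_iff polys_in_def)
    ultimately show ?thesis by (rule lin_ext_congruent_in_ideal[OF ideal])
  qed
  then show ?thesis using init_in_polys_in[OF g] by (simp add: transfer_def)
qed


lemma init_ideal_subset_Tx:
  assumes "pseudo_groebner (polys_in (xvars r s)) \<omega>1 I F" and "I \<subseteq> polys_in (xvars r s)"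
    and "\<forall>f\<in>F. valid_rep f (fst (rep f)) (snd (rep f))"
    and "init (pullback_weight \<omega>1 \<omega>2) ` LiftX t F rep \<subseteq> K"
  shows "init_ideal (polys_in (xvars r s)) \<omega>1 I \<subseteq> Tx"
proof -
  from assms(1) have F: "F \<subseteq> I" "ideal_gen (polys_in (xvars r s)) (init \<omega>1 ` F) = init_ideal (polys_in (xvars r s)) \<omega>1 I"
    by (simp_all add: pseudo_groebner_def)
  have "init \<omega>1 f \<in> Tx" if f: "f \<in> F" for f
  proof (rule init_in_Tx)
    show "f \<in> polys_in (xvars r s)" using f F(1) assms(2) by blast
    show "valid_rep f (fst (rep f)) (snd (rep f))" using f assms(3) by blast
    fix k assume "k \<in> index_tuples t (fst (rep f))"
    then have "lift_x f (fst (rep f)) (snd (rep f)) k \<in> LiftX t F rep"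
      using f unfolding LiftX_def by blast
    then show "init (pullback_weight \<omega>1 \<omega>2) (lift_x f (fst (rep f)) (snd (rep f)) k) \<in> K"
      using assms(4) by blast
  qed
  then show ?thesis unfolding F(2)[symmetric] by (intro ideal_gen_least[OF Tx_ideal]) auto
qed

lemma init_ideal_subset_Ty:
  assumes "pseudo_groebner (polys_in (xvars r t)) \<omega>2 J G" and "J \<subseteq> polys_in (xvars r t)"
    and "\<forall>g\<in>G. valid_rep g (fst (rep g)) (snd (rep g))"
    and "init (pullback_weight \<omega>1 \<omega>2) ` LiftY s G rep \<subseteq> K"
  shows "init_ideal (polys_in (xvars r t)) \<omega>2 J \<subseteq> Ty"
proof -
  from assms(1) have G: "G \<subseteq> J" "ideal_gen (polys_in (xvars r t)) (init \<omega>2 ` G) = init_ideal (polys_in (xvars r t)) \<omega>2 J"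
    by (simp_all add: pseudo_groebner_def)
  have "init \<omega>2 g \<in> Ty" if g: "g \<in> G" for g
  proof (rule init_in_Ty)
    show "g \<in> polys_in (xvars r t)" using g G(1) assms(2) by blast
    show "valid_rep g (fst (rep g)) (snd (rep g))" using g assms(3) by blast
    fix j assume "j \<in> index_tuples s (fst (rep g))"
    then have "lift_y g (fst (rep g)) (snd (rep g)) j \<in> LiftY s G rep"
      using g unfolding LiftY_def by blast
    then show "init (pullback_weight \<omega>1 \<omega>2) (lift_y g (fst (rep g)) (snd (rep g)) j) \<in> K"
      using assms(4) by blast
  qed
  then show ?thesis unfolding G(2)[symmetric] by (intro ideal_gen_least[OF Ty_ideal]) auto
qed

lemma zmon_init_monomial_in_ideal:
  assumes X: "weighted_ideal (xvars r s) I \<omega>1 deg1" and Y: "weighted_ideal (xvars r t) J \<omega>2 deg2"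
    and TxI: "init_ideal (polys_in (xvars r s)) \<omega>1 I \<subseteq> Tx"
    and TyJ: "init_ideal (polys_in (xvars r t)) \<omega>2 J \<subseteq> Ty"
    and p: "p \<in> ideal_gen (polys_in (Inl ` xvars r s \<union> Inr ` xvars r t))
      (subst (\<lambda>v. Var (Inl v)) ` I \<union> subst (\<lambda>v. Var (Inr v)) ` J)"
    and M: "M \<in> keys (init (case_sum \<omega>1 \<omega>2) p)"
  shows "zmon (xpart M) (ypart M) \<in> K"
proof -
  interpret weighted_ideal_pair "xvars r s" I \<omega>1 deg1 "xvars r t" J \<omega>2 deg2
    using X Y by (simp add: weighted_ideal_pair_def)
  have "p \<in> Rxy" using p ideal_subset[OF sum_ideal_is_ideal[OF X.ideal_subset_polys Y.ideal_subset_polys]]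
    by blast
  then have "keys M \<subseteq> Inl ` xvars r s \<union> Inr ` xvars r t" using M by (simp add: polys_in_def keys_init)
  then have "keys (xpart M) \<subseteq> xvars r s" "keys (ypart M) \<subseteq> xvars r t"
    by (auto simp: keys_xpart keys_ypart)
  moreover have "\<not> X.standard (xpart M) \<or> \<not> Y.standard (ypart M)"
    by (rule init_monomial_nonstandard[OF p M])
  ultimately show ?thesis
  proof (elim disjE)
    assume "\<not> X.standard (xpart M)"
    then have "mono (xpart M) \<in> Tx" using TxI by (auto simp: X.standard_def)
    then show ?thesis using \<open>keys (ypart M) \<subseteq> xvars r t\<close> by (rule mono_in_transfer)
  next
    assume "\<not> Y.standard (ypart M)"
    then have "mono (ypart M) \<in> Ty" using TyJ by (auto simp: Y.standard_def)
    from mono_in_transfer[OF this \<open>keys (xpart M) \<subseteq> xvars r s\<close>] show ?thesis .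
  qed
qed

text \<open>Modulo \<open>K\<close>, each monomial \<open>z\<^sup>Z\<close> of \<open>in(h)\<close> may be replaced by \<open>zmon\<close> of its projections,
  hence by a function of the monomial \<open>\<phi>\<^sub>B(z\<^sup>Z)\<close>; unless \<open>\<phi>\<^sub>B(in(h)) = 0\<close>, this is a monomial
  of \<open>in(\<phi>\<^sub>B h)\<close>, whose class lies in \<open>K\<close> by the previous lemma.\<close>

lemma init_TFP_in_ideal:
  assumes X: "weighted_ideal (xvars r s) I \<omega>1 deg1" and Y: "weighted_ideal (xvars r t) J \<omega>2 deg2"
    and TxI: "init_ideal (polys_in (xvars r s)) \<omega>1 I \<subseteq> Tx"
    and TyJ: "init_ideal (polys_in (xvars r t)) \<omega>2 J \<subseteq> Ty"
    and h: "h \<in> toric_fiber_product r s t I J"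
  shows "init (pullback_weight \<omega>1 \<omega>2) h \<in> K"
proof -
  let ?g = "init (pullback_weight \<omega>1 \<omega>2) h"
  have hz: "h \<in> polys_in (zvars r s t)"
    and hP: "phiB h \<in> ideal_gen (polys_in (Inl ` xvars r s \<union> Inr ` xvars r t))
      (subst (\<lambda>v. Var (Inl v)) ` I \<union> subst (\<lambda>v. Var (Inr v)) ` J)"
    using h by (simp_all add: toric_fiber_product_def)
  have "lin_ext (\<lambda>M. zmon (xpart M) (ypart M)) (phiB ?g) \<in> K"
  proof (cases "phiB ?g = 0")
    case False
    then have "init (case_sum \<omega>1 \<omega>2) (phiB h) = phiB ?g"
      unfolding phiB_eq by (intro init_lin_ext_mono[where c = 0]) (simp_all add: mweight_phiB_mon)
    then show ?thesis
      using zmon_init_monomial_in_ideal[OF X Y TxI TyJ hP] by (intro lin_ext_in_ideal[OF ideal]) auto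
  qed (simp add: ideal_zero[OF ideal])
  then have "lin_ext (\<lambda>Z. zmon (pm_image px Z) (pm_image py Z)) ?g \<in> K"
    by (simp add: phiB_eq lin_ext_lin_ext_mono)
  moreover have "mono Z - zmon (pm_image px Z) (pm_image py Z) \<in> K" if "Z \<in> keys ?g" for Z
  proof -
    have "keys Z \<subseteq> zvars r s t" using that hz by (auto simp: keys_init polys_in_def)
    from ideal_uminus[OF ideal zmon_congruent[OF this]] show ?thesis by simp
  qed
  ultimately have "lin_ext mono ?g \<in> K" by (rule lin_ext_congruent_in_ideal[OF ideal])
  then show ?thesis by simp
qed

end

lemma finite_xvars: "finite (xvars r s)"
proof (rule finite_subset)
  show "xvars r s \<subseteq> (\<Union>i\<in>{1..r}. {i} \<times> {1..s i})" by (auto simp: xvars_def)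
qed auto

lemma finite_bounded_monos:
  assumes "finite X"
  shows "finite {m :: 'v \<Rightarrow>\<^sub>0 nat. keys m \<subseteq> X \<and> tdeg m \<le> N}"
proof -
  let ?S = "{m :: 'v \<Rightarrow>\<^sub>0 nat. keys m \<subseteq> X \<and> tdeg m \<le> N}"
  let ?B = "{f :: 'v \<Rightarrow> nat. \<forall>x. (x \<in> X \<longrightarrow> f x \<in> {..N}) \<and> (x \<notin> X \<longrightarrow> f x = 0)}"
  have "inj_on lookup ?S" by (rule inj_onI) (rule poly_mapping_eqI, simp)
  moreover have "lookup ` ?S \<subseteq> ?B"
  proof
    fix f assume "f \<in> lookup ` ?S"
    then obtain m where m: "m \<in> ?S" "f = lookup m" by blast
    have "lookup m x \<le> N" for x using m(1) lookup_le_tdeg[of m x] by simp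
    moreover have "x \<notin> X \<Longrightarrow> lookup m x = 0" for x using m(1) by (auto simp: in_keys_iff)
    ultimately show "f \<in> ?B" using m(2) by simp
  qed
  moreover have "finite ?B" using assms by (intro finite_set_of_finite_funs) auto
  ultimately show ?thesis by (meson finite_imageD finite_subset)
qed

lemma omega_mdeg_eq_tdeg:
  fixes a :: "nat \<Rightarrow> 'd::finite \<Rightarrow> int" and \<omega> :: "'d \<Rightarrow> rat"
  assumes omega: "\<forall>i\<in>{1..r}. (\<Sum>c\<in>UNIV. \<omega> c * of_int (a i c)) = 1"
    and m: "keys m \<subseteq> xvars r s"
  shows "(\<Sum>c\<in>UNIV. \<omega> c * of_int (mdeg a m c)) = of_nat (tdeg m)"
proof -
  have "(\<Sum>c\<in>UNIV. \<omega> c * of_int (mdeg a m c))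
      = (\<Sum>v\<in>keys m. of_nat (lookup m v) * (\<Sum>c\<in>UNIV. \<omega> c * of_int (a (fst v) c)))"
    by (simp add: mdeg_def sum_distrib_left mult_ac sum.swap[of _ UNIV])
  also have "\<dots> = (\<Sum>v\<in>keys m. of_nat (lookup m v))"
    using omega m by (intro sum.cong) (auto simp: xvars_def)
  finally show ?thesis by (simp add: tdeg_def)
qed

lemma finite_degree_xvars:
  fixes a :: "nat \<Rightarrow> 'd::finite \<Rightarrow> int" and \<omega> :: "'d \<Rightarrow> rat"
  assumes omega: "\<forall>i\<in>{1..r}. (\<Sum>c\<in>UNIV. \<omega> c * of_int (a i c)) = 1"
  shows "finite {m. keys m \<subseteq> xvars r s \<and> mdeg a m = D}"
proof -
  define N where "N = nat \<lfloor>\<Sum>c\<in>UNIV. \<omega> c * of_int (D c)\<rfloor>"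
  have "tdeg m \<le> N" if "keys m \<subseteq> xvars r s" "mdeg a m = D" for m
    using omega_mdeg_eq_tdeg[OF omega that(1)] that(2) by (simp add: N_def)
  then have "{m. keys m \<subseteq> xvars r s \<and> mdeg a m = D} \<subseteq> {m. keys m \<subseteq> xvars r s \<and> tdeg m \<le> N}"
    by blast
  then show ?thesis by (rule finite_subset) (rule finite_bounded_monos[OF finite_xvars])
qed

lemma finite_index_tuples: "finite (index_tuples t is)"
proof -
  define M where "M = (\<Sum>i\<in>set is. t i)"
  have "set k \<subseteq> {..M}" if k: "k \<in> index_tuples t is" for k
  proof
    fix x assume "x \<in> set k"
    then obtain l where l: "l < length is" "x = k ! l" using k by (auto simp: in_set_conv_nth index_tuples_def)
    have "t (is ! l) \<le> M" unfolding M_def using l(1) by (intro member_le_sum) auto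
    then show "x \<in> {..M}" using k l by (auto simp: index_tuples_def)
  qed
  then have "index_tuples t is \<subseteq> {k. set k \<subseteq> {..M} \<and> length k = length is}"
    by (auto simp: index_tuples_def)
  then show ?thesis by (rule finite_subset) (rule finite_lists_length_eq, simp)
qed

lemma finite_LiftX: "finite F \<Longrightarrow> finite (LiftX t F rep)"
proof -
  assume "finite F"
  moreover have "LiftX t F rep = (\<Union>f\<in>F. (\<lambda>k. lift_x f (fst (rep f)) (snd (rep f)) k) ` index_tuples t (fst (rep f)))"
    by (auto simp: LiftX_def)
  ultimately show ?thesis using finite_index_tuples by simp
qed

lemma finite_LiftY: "finite G \<Longrightarrow> finite (LiftY s G rep)"
proof -
  assume "finite G"
  moreover have "LiftY s G rep = (\<Union>g\<in>G. (\<lambda>j. lift_y g (fst (rep g)) (snd (rep g)) j) ` index_tuples s (fst (rep g)))"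
    by (auto simp: LiftY_def)
  ultimately show ?thesis using finite_index_tuples by simp
qed

lemma finite_QuadB: "finite (QuadB r s t)"
proof -
  define S where "S = (\<Sum>i\<le>r. s i)"
  define T where "T = (\<Sum>i\<le>r. t i)"
  have sS: "s i \<le> S" and tT: "t i \<le> T" if "i \<le> r" for i
    unfolding S_def T_def using that by (auto intro: member_le_sum)
  let ?q = "\<lambda>(i, j1, j2, k1, k2). Var (i, j1, k2) * Var (i, j2, k1) - Var (i, j1, k1) * Var (i, j2, k2)"
  have "QuadB r s t \<subseteq> ?q ` ({..r} \<times> {..S} \<times> {..S} \<times> {..T} \<times> {..T})"
  proof
    fix q assume "q \<in> QuadB r s t"
    then obtain i j1 j2 k1 k2
      where q: "q = Var (i, j1, k2) * Var (i, j2, k1) - Var (i, j1, k1) * Var (i, j2, k2)"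
        and bounds: "1 \<le> i" "i \<le> r" "1 \<le> j1" "j1 < j2" "j2 \<le> s i" "1 \<le> k1" "k1 < k2" "k2 \<le> t i"
      unfolding QuadB_def by blast
    have "(i, j1, j2, k1, k2) \<in> {..r} \<times> {..S} \<times> {..S} \<times> {..T} \<times> {..T}"
      using bounds sS[of i] tT[of i] by auto
    then show "q \<in> ?q ` ({..r} \<times> {..S} \<times> {..S} \<times> {..T} \<times> {..T})"
      using q by (intro image_eqI[of _ _ "(i, j1, j2, k1, k2)"]) auto
  qed
  then show ?thesis by (rule finite_subset) simp
qed

lemma weighted_ideal_xvars:
  fixes a :: "nat \<Rightarrow> 'd::finite \<Rightarrow> int" and \<omega> :: "'d \<Rightarrow> rat"
  assumes "\<forall>i\<in>{1..r}. (\<Sum>c\<in>UNIV. \<omega> c * of_int (a i c)) = 1"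
    and "is_ideal (polys_in (xvars r s)) I" "homogeneous_ideal a I" "groebner (polys_in (xvars r s)) \<omega>1 I F"
  shows "weighted_ideal (xvars r s) I \<omega>1 (mdeg a)"
  using assms finite_degree_xvars[OF assms(1)]
  by unfold_locales (simp_all add: groebner_def homogeneous_ideal_def)

lemma pseudo_groebnerI:
  assumes "finite G" "G \<subseteq> I" "I \<subseteq> polys_in V"
    and "\<And>h. h \<in> I \<Longrightarrow> init \<nu> h \<in> ideal_gen (polys_in V) (init \<nu> ` G)"
  shows "pseudo_groebner (polys_in V) \<nu> I G"
proof -
  have "init \<nu> ` G \<subseteq> polys_in V" using assms(2,3) init_in_polys_in by blast
  then have "init_ideal (polys_in V) \<nu> I \<subseteq> ideal_gen (polys_in V) (init \<nu> ` G)"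
    unfolding init_ideal_def using assms(4) by (intro ideal_gen_least ideal_gen_is_ideal) auto
  moreover have "ideal_gen (polys_in V) (init \<nu> ` G) \<subseteq> init_ideal (polys_in V) \<nu> I"
    unfolding init_ideal_def using assms(2) by (intro ideal_gen_mono) auto
  ultimately show ?thesis using assms(1,2) by (auto simp: pseudo_groebner_def)
qed

lemma quad_ideal_ideal_gen:
  assumes "QuadB r s t \<subseteq> Gens" "Gens \<subseteq> polys_in (zvars r s t)"
  shows "quad_ideal r s t (ideal_gen (polys_in (zvars r s t)) (init (pullback_weight \<omega>1 \<omega>2) ` Gens))"
proof
  have "init (pullback_weight \<omega>1 \<omega>2) ` Gens \<subseteq> polys_in (zvars r s t)"
    using assms(2) init_in_polys_in by blast
  then show "is_ideal (polys_in (zvars r s t)) (ideal_gen (polys_in (zvars r s t)) (init (pullback_weight \<omega>1 \<omega>2) ` Gens))"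
    by (rule ideal_gen_is_ideal)
  have "QuadB r s t \<subseteq> init (pullback_weight \<omega>1 \<omega>2) ` Gens"
    using assms(1) QuadB_init by (metis (no_types, lifting) image_eqI subsetD subsetI)
  then show "QuadB r s t \<subseteq> ideal_gen (polys_in (zvars r s t)) (init (pullback_weight \<omega>1 \<omega>2) ` Gens)"
    using ideal_gen_base by blast
qed

lemma generators_in_TFP:
  fixes I J F G :: "(nat \<times> nat, 'k::field) mpoly set"
  assumes "I \<subseteq> polys_in (xvars r s)" "J \<subseteq> polys_in (xvars r t)" "F \<subseteq> I" "G \<subseteq> J"
    and "\<forall>f\<in>F. valid_rep f (fst (repF f)) (snd (repF f))"
    and "\<forall>g\<in>G. valid_rep g (fst (repG g)) (snd (repG g))"
  shows "LiftX t F repF \<union> LiftY s G repG \<union> QuadB r s t \<subseteq> toric_fiber_product r s t I J"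
  using assms lift_x_in_TFP[OF assms(1,2)] lift_y_in_TFP[OF assms(1,2)] QuadB_in_TFP[OF assms(1,2)]
  by (auto simp: LiftX_def LiftY_def)

theorem theorem2p8:
  fixes r :: nat and s t :: "nat \<Rightarrow> nat"
    and a :: "nat \<Rightarrow> 'd::finite \<Rightarrow> int" and \<omega> :: "'d \<Rightarrow> rat"
    and I J F G :: "(nat \<times> nat, 'k::field) mpoly set"
    and \<omega>1 \<omega>2 :: "nat \<times> nat \<Rightarrow> real"
    and repF repG :: "(nat \<times> nat, 'k) mpoly \<Rightarrow> nat list \<times> ((nat \<times> nat \<Rightarrow>\<^sub>0 nat) \<Rightarrow> nat list)"
  assumes r_pos: "1 \<le> r"
    and s_pos: "\<forall>i\<in>{1..r}. 0 < s i" and t_pos: "\<forall>i\<in>{1..r}. 0 < t i"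
    and omega: "\<forall>i\<in>{1..r}. (\<Sum>c\<in>UNIV. \<omega> c * of_int (a i c)) = 1"
    and I_ideal: "is_ideal (polys_in (xvars r s)) I" and I_hom: "homogeneous_ideal a I"
    and J_ideal: "is_ideal (polys_in (xvars r t)) J" and J_hom: "homogeneous_ideal a J"
    and indep: "lin_indep r a"
    and F_gb: "groebner (polys_in (xvars r s)) \<omega>1 I F" and F_hom: "\<forall>f\<in>F. homogeneous a f"
    and G_gb: "groebner (polys_in (xvars r t)) \<omega>2 J G" and G_hom: "\<forall>g\<in>G. homogeneous a g"
    and repF_ok: "\<forall>f\<in>F. valid_rep f (fst (repF f)) (snd (repF f))"
    and repG_ok: "\<forall>g\<in>G. valid_rep g (fst (repG g)) (snd (repG g))"
  shows "pseudo_groebner (polys_in (zvars r s t)) (pullback_weight \<omega>1 \<omega>2)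
           (toric_fiber_product r s t I J)
           (LiftX t F repF \<union> LiftY s G repG \<union> QuadB r s t)"
proof -
  let ?\<nu> = "pullback_weight \<omega>1 \<omega>2" and ?Gens = "LiftX t F repF \<union> LiftY s G repG \<union> QuadB r s t"
  define N where "N = ideal_gen (polys_in (zvars r s t)) (init ?\<nu> ` ?Gens)"
  have IR: "I \<subseteq> polys_in (xvars r s)" and JR: "J \<subseteq> polys_in (xvars r t)"
    using I_ideal J_ideal by (simp_all add: is_ideal_def)
  have F: "finite F" "pseudo_groebner (polys_in (xvars r s)) \<omega>1 I F"
    and G: "finite G" "pseudo_groebner (polys_in (xvars r t)) \<omega>2 J G"
    using F_gb G_gb by (simp_all add: groebner_def pseudo_groebner_def)
  have Gens: "?Gens \<subseteq> toric_fiber_product r s t I J"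
    using F(2) G(2) by (intro generators_in_TFP[OF IR JR _ _ repF_ok repG_ok]) (simp_all add: pseudo_groebner_def)
  then have N: "quad_ideal r s t N"
    unfolding N_def toric_fiber_product_def by (intro quad_ideal_ideal_gen) blast+
  have inits: "init ?\<nu> ` ?Gens \<subseteq> N" unfolding N_def by (rule ideal_gen_base)
  have "init_ideal (polys_in (xvars r s)) \<omega>1 I \<subseteq> quad_ideal.Tx r s t N"
    using inits by (intro quad_ideal.init_ideal_subset_Tx[OF N F(2) IR repF_ok]) auto
  moreover have "init_ideal (polys_in (xvars r t)) \<omega>2 J \<subseteq> quad_ideal.Ty r s t N"
    using inits by (intro quad_ideal.init_ideal_subset_Ty[OF N G(2) JR repG_ok]) auto
  ultimately have "init ?\<nu> h \<in> N" if "h \<in> toric_fiber_product r s t I J" for h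
    using quad_ideal.init_TFP_in_ideal[OF N weighted_ideal_xvars[OF omega I_ideal I_hom F_gb]
        weighted_ideal_xvars[OF omega J_ideal J_hom G_gb] _ _ that] by blast
  moreover have "finite ?Gens" using finite_LiftX[OF F(1)] finite_LiftY[OF G(1)] finite_QuadB by blast
  ultimately show ?thesis
    unfolding N_def using Gens by (intro pseudo_groebnerI) (simp_all add: toric_fiber_product_def)
qed

end
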